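(* Let $R$ be a complete discrete valuation ring of characteristic $p>0$ with uniformizer $\pi$, field of fractions $K$, and normalized valuation $v_K$. Let $H$ be a primitively generated $K$-Hopf algebra of rank $p^2$, $t_1,t_2$ a $K$-basis of $\mathrm{Prim}(H)$ with associated matrix $B$. Let \[\Theta=\begin{pmatrix}\pi^i&0\\ \theta&\pi^j\end{pmatrix},\qquad \Theta'=\begin{pmatrix}\pi^{i'}&0\\ \theta'&\pi^{j'}\end{pmatrix},\] with $i,j,i',j'\in\mathbb{Z}$, $\theta,\theta'\in K$, $v_K(\theta)\le j$, $v_K(\theta')\le j'$, and suppose $\Theta^{-1}B\Theta^{(p)}$ and $\Theta'^{-1}B\Theta'^{(p)}$ both lie in $M_2(R)$. Then $\Theta$ and $\Theta'$ give the same Hopf order, i.e. $R[\pi^it_1+\theta t_2,\ \pi^jt_2]=R[\pi^{i'}t_1+\theta' t_2,\ \pi^{j'}t_2]$ as subalgebras of $H$, if and only if $i=i'$, $j=j'$, and $v_K(\theta-\theta')\ge j$.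
   Context: $\Theta^{(p)}$ denotes the matrix obtained by raising each entry of $\Theta$ to the $p$-th power. $t$ is primitive if $\Delta(t)=t\otimes1+1\otimes t$; $\mathrm{Prim}(H)$ is the module of primitives; $H$ is primitively generated if generated as an algebra by its primitives. The associated matrix $B=(b_{j,i})$ is defined by $t_i^p=\sum_j b_{j,i}t_j$. When $\Theta=(\theta_{j,i})\in\mathrm{GL}_2(K)$ satisfies $\Theta^{-1}B\Theta^{(p)}\in M_2(R)$, the Hopf order given by $\Theta$ is the $R$-subalgebra $R[\theta_{1,1}t_1+\theta_{2,1}t_2,\ \theta_{1,2}t_1+\theta_{2,2}t_2]$ of $H$, which is an $R$-Hopf order in $H$ (a finitely generated projective $R$-submodule that is an $R$-Hopf algebra under the inherited operations and spans $H$ over $K$). *)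

theory Defs
  imports "HOL-Analysis.Finite_Cartesian_Product" "HOL-Computational_Algebra.Primes"
begin

text \<open>A normalized discrete valuation on a field K is modelled by v :: K => int on the
nonzero elements (the value of v at 0 is irrelevant; v(0) = +infinity is encoded by the
predicates vK_ge and vK_le below).\<close>

definition vK_ge :: "('k::field \<Rightarrow> int) \<Rightarrow> 'k \<Rightarrow> int \<Rightarrow> bool" where
  "vK_ge v x n \<longleftrightarrow> x = 0 \<or> n \<le> v x"

definition vK_le :: "('k::field \<Rightarrow> int) \<Rightarrow> 'k \<Rightarrow> int \<Rightarrow> bool" where
  "vK_le v x n \<longleftrightarrow> x \<noteq> 0 \<and> v x \<le> n"

definition normalized_discrete_valuation :: "('k::field \<Rightarrow> int) \<Rightarrow> bool" where
  "normalized_discrete_valuation v \<longleftrightarrow>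
     (\<forall>x y. x \<noteq> 0 \<longrightarrow> y \<noteq> 0 \<longrightarrow> v (x * y) = v x + v y) \<and>
     (\<forall>x y. x \<noteq> 0 \<longrightarrow> y \<noteq> 0 \<longrightarrow> x + y \<noteq> 0 \<longrightarrow> min (v x) (v y) \<le> v (x + y)) \<and>
     (\<exists>x. x \<noteq> 0 \<and> v x = 1)"

definition valuation_complete :: "('k::field \<Rightarrow> int) \<Rightarrow> bool" where
  "valuation_complete v \<longleftrightarrow>
     (\<forall>s :: nat \<Rightarrow> 'k.
        (\<forall>n. \<exists>N. \<forall>m\<ge>N. \<forall>m'\<ge>N. vK_ge v (s m - s m') n) \<longrightarrow>
        (\<exists>L. \<forall>n. \<exists>N. \<forall>m\<ge>N. vK_ge v (s m - L) n))"

definition val_ring :: "('k::field \<Rightarrow> int) \<Rightarrow> 'k set" where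
  "val_ring v = {x. vK_ge v x 0}"

text \<open>A K-algebra structure on the ring 'h is given by its structure map phi : K -> H
(a unital ring homomorphism into the centre); scalar multiplication is c.x = phi c * x.\<close>
definition K_algebra :: "('k::field \<Rightarrow> 'h::ring_1) \<Rightarrow> bool" where
  "K_algebra \<phi> \<longleftrightarrow> \<phi> 1 = 1 \<and> (\<forall>a b. \<phi> (a + b) = \<phi> a + \<phi> b) \<and>
     (\<forall>a b. \<phi> (a * b) = \<phi> a * \<phi> b) \<and> (\<forall>a x. \<phi> a * x = x * \<phi> a)"

definition K_linear_form :: "('k::field \<Rightarrow> 'h::ring_1) \<Rightarrow> ('h \<Rightarrow> 'k) \<Rightarrow> bool" where
  "K_linear_form \<phi> f \<longleftrightarrow> (\<forall>x y. f (x + y) = f x + f y) \<and> (\<forall>c x. f (\<phi> c * x) = c * f x)"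

definition K_bilinear_form :: "('k::field \<Rightarrow> 'h::ring_1) \<Rightarrow> ('h \<Rightarrow> 'h \<Rightarrow> 'k) \<Rightarrow> bool" where
  "K_bilinear_form \<phi> f \<longleftrightarrow> (\<forall>y. K_linear_form \<phi> (\<lambda>x. f x y)) \<and> (\<forall>x. K_linear_form \<phi> (f x))"

definition K_trilinear_form :: "('k::field \<Rightarrow> 'h::ring_1) \<Rightarrow> ('h \<Rightarrow> 'h \<Rightarrow> 'h \<Rightarrow> 'k) \<Rightarrow> bool" where
  "K_trilinear_form \<phi> f \<longleftrightarrow> (\<forall>y z. K_linear_form \<phi> (\<lambda>x. f x y z)) \<and>
     (\<forall>x z. K_linear_form \<phi> (\<lambda>y. f x y z)) \<and> (\<forall>x y. K_linear_form \<phi> (f x y))"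

text \<open>An element of H (x)_K H is represented by a finite list of pairs (a_i,b_i), standing for
sum a_i (x) b_i. Two representatives denote the same tensor iff all K-bilinear forms agree
on them (linear functionals on V (x) W are exactly the bilinear forms, and they separate points).\<close>
definition tensor_eq :: "('k::field \<Rightarrow> 'h::ring_1) \<Rightarrow> ('h \<times> 'h) list \<Rightarrow> ('h \<times> 'h) list \<Rightarrow> bool" where
  "tensor_eq \<phi> xs ys \<longleftrightarrow> (\<forall>f. K_bilinear_form \<phi> f \<longrightarrow>
      (\<Sum>(a, b)\<leftarrow>xs. f a b) = (\<Sum>(a, b)\<leftarrow>ys. f a b))"

definition hopf_algebra ::
  "('k::field \<Rightarrow> 'h::ring_1) \<Rightarrow> ('h \<Rightarrow> ('h \<times> 'h) list) \<Rightarrow> ('h \<Rightarrow> 'k) \<Rightarrow> ('h \<Rightarrow> 'h) \<Rightarrow> bool" where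
  "hopf_algebra \<phi> \<Delta> \<epsilon> S \<longleftrightarrow>
     K_algebra \<phi> \<and>
     \<comment> \<open>Delta is K-linear\<close>
     (\<forall>x y. tensor_eq \<phi> (\<Delta> (x + y)) (\<Delta> x @ \<Delta> y)) \<and>
     (\<forall>c x. tensor_eq \<phi> (\<Delta> (\<phi> c * x)) (map (\<lambda>(a, b). (\<phi> c * a, b)) (\<Delta> x))) \<and>
     \<comment> \<open>Delta is an algebra map\<close>
     tensor_eq \<phi> (\<Delta> 1) [(1, 1)] \<and>
     (\<forall>x y. tensor_eq \<phi> (\<Delta> (x * y))
        (concat (map (\<lambda>(a, b). map (\<lambda>(c, d). (a * c, b * d)) (\<Delta> y)) (\<Delta> x)))) \<and>
     \<comment> \<open>coassociativity\<close>
     (\<forall>x g. K_trilinear_form \<phi> g \<longrightarrow>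
        (\<Sum>(a, b)\<leftarrow>\<Delta> x. \<Sum>(c, d)\<leftarrow>\<Delta> a. g c d b) =
        (\<Sum>(a, b)\<leftarrow>\<Delta> x. \<Sum>(c, d)\<leftarrow>\<Delta> b. g a c d)) \<and>
     \<comment> \<open>counit: K-linear algebra map with the counit axioms\<close>
     K_linear_form \<phi> \<epsilon> \<and> \<epsilon> 1 = 1 \<and> (\<forall>x y. \<epsilon> (x * y) = \<epsilon> x * \<epsilon> y) \<and>
     (\<forall>x. (\<Sum>(a, b)\<leftarrow>\<Delta> x. \<phi> (\<epsilon> a) * b) = x) \<and>
     (\<forall>x. (\<Sum>(a, b)\<leftarrow>\<Delta> x. a * \<phi> (\<epsilon> b)) = x) \<and>
     \<comment> \<open>antipode: K-linear with the antipode axioms\<close>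
     (\<forall>x y. S (x + y) = S x + S y) \<and> (\<forall>c x. S (\<phi> c * x) = \<phi> c * S x) \<and>
     (\<forall>x. (\<Sum>(a, b)\<leftarrow>\<Delta> x. S a * b) = \<phi> (\<epsilon> x)) \<and>
     (\<forall>x. (\<Sum>(a, b)\<leftarrow>\<Delta> x. a * S b) = \<phi> (\<epsilon> x))"

definition K_rank :: "('k::field \<Rightarrow> 'h::ring_1) \<Rightarrow> nat \<Rightarrow> bool" where
  "K_rank \<phi> n \<longleftrightarrow> (\<exists>e :: nat \<Rightarrow> 'h.
     (\<forall>x. \<exists>c. x = (\<Sum>k<n. \<phi> (c k) * e k)) \<and>
     (\<forall>c. (\<Sum>k<n. \<phi> (c k) * e k) = 0 \<longrightarrow> (\<forall>k<n. c k = 0)))"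

definition primitive :: "('k::field \<Rightarrow> 'h::ring_1) \<Rightarrow> ('h \<Rightarrow> ('h \<times> 'h) list) \<Rightarrow> 'h \<Rightarrow> bool" where
  "primitive \<phi> \<Delta> t \<longleftrightarrow> tensor_eq \<phi> (\<Delta> t) [(t, 1), (1, t)]"

definition Prim :: "('k::field \<Rightarrow> 'h::ring_1) \<Rightarrow> ('h \<Rightarrow> ('h \<times> 'h) list) \<Rightarrow> 'h set" where
  "Prim \<phi> \<Delta> = {t. primitive \<phi> \<Delta> t}"

text \<open>The subring of H generated by a set A (of scalars) and a set S of elements;
A = range phi gives the K-subalgebra generated by S, A = phi ` R the R-subalgebra R[S].\<close>
inductive_set subalg_gen :: "'h::ring_1 set \<Rightarrow> 'h set \<Rightarrow> 'h set" for A S where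
  base: "a \<in> A \<Longrightarrow> a \<in> subalg_gen A S"
| gen: "s \<in> S \<Longrightarrow> s \<in> subalg_gen A S"
| zero: "0 \<in> subalg_gen A S"
| one: "1 \<in> subalg_gen A S"
| add: "x \<in> subalg_gen A S \<Longrightarrow> y \<in> subalg_gen A S \<Longrightarrow> x + y \<in> subalg_gen A S"
| neg: "x \<in> subalg_gen A S \<Longrightarrow> - x \<in> subalg_gen A S"
| mult: "x \<in> subalg_gen A S \<Longrightarrow> y \<in> subalg_gen A S \<Longrightarrow> x * y \<in> subalg_gen A S"

definition primitively_generated :: "('k::field \<Rightarrow> 'h::ring_1) \<Rightarrow> ('h \<Rightarrow> ('h \<times> 'h) list) \<Rightarrow> bool" where
  "primitively_generated \<phi> \<Delta> \<longleftrightarrow> subalg_gen (range \<phi>) (Prim \<phi> \<Delta>) = UNIV"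

definition prim_basis :: "('k::field \<Rightarrow> 'h::ring_1) \<Rightarrow> ('h \<Rightarrow> ('h \<times> 'h) list) \<Rightarrow> 'h \<Rightarrow> 'h \<Rightarrow> bool" where
  "prim_basis \<phi> \<Delta> t1 t2 \<longleftrightarrow> t1 \<in> Prim \<phi> \<Delta> \<and> t2 \<in> Prim \<phi> \<Delta> \<and>
     (\<forall>a b. \<phi> a * t1 + \<phi> b * t2 = 0 \<longrightarrow> a = 0 \<and> b = 0) \<and>
     (\<forall>t\<in>Prim \<phi> \<Delta>. \<exists>a b. t = \<phi> a * t1 + \<phi> b * t2)"

text \<open>mat2 a b c d is the matrix with rows (a b) and (c d); entry (r,c) is M $ r $ c.\<close>
definition mat2 :: "'a \<Rightarrow> 'a \<Rightarrow> 'a \<Rightarrow> 'a \<Rightarrow> 'a ^ 2 ^ 2" where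
  "mat2 a b c d = (\<chi> r s. if r = 1 then (if s = 1 then a else b) else (if s = 1 then c else d))"

definition entrywise_pow :: "'a::semiring_1 ^ 2 ^ 2 \<Rightarrow> nat \<Rightarrow> 'a ^ 2 ^ 2" where
  "entrywise_pow M p = (\<chi> r s. (M $ r $ s) ^ p)"

definition in_M2 :: "'a set \<Rightarrow> 'a ^ 2 ^ 2 \<Rightarrow> bool" where
  "in_M2 A M \<longleftrightarrow> (\<forall>r s. M $ r $ s \<in> A)"

text \<open>The Hopf order given by Theta = (theta_{j,i}):
  R[theta_11 t1 + theta_21 t2, theta_12 t1 + theta_22 t2].\<close>
definition hopf_order_given_by ::
  "('k::field \<Rightarrow> 'h::ring_1) \<Rightarrow> 'k set \<Rightarrow> 'h \<Rightarrow> 'h \<Rightarrow> 'k ^ 2 ^ 2 \<Rightarrow> 'h set" where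
  "hopf_order_given_by \<phi> R t1 t2 \<Theta> = subalg_gen (\<phi> ` R)
     {\<phi> (\<Theta> $ 1 $ 1) * t1 + \<phi> (\<Theta> $ 2 $ 1) * t2, \<phi> (\<Theta> $ 1 $ 2) * t1 + \<phi> (\<Theta> $ 2 $ 2) * t2}"

end

theory Submission
  imports Defs "HOL-Analysis.Cartesian_Space"
begin

text \<open>The ``if'' direction is elementary: if \<open>\<pi>\<^sup>j\<close> divides \<open>\<theta> - \<theta>'\<close>, the generators of
each order are \<open>R\<close>-combinations of the generators of the other.

For ``only if'', put \<open>x\<^sub>1 = \<pi>\<^sup>i t\<^sub>1 + \<theta> t\<^sub>2\<close> and \<open>x\<^sub>2 = \<pi>\<^sup>j t\<^sub>2\<close>. The integrality of
\<open>\<Theta>\<^sup>-\<^sup>1 B \<Theta>\<^sup>(\<^sup>p\<^sup>)\<close> makes \<open>x\<^sub>1\<^sup>p\<close>, \<open>x\<^sub>2\<^sup>p\<close> and the commutator \<open>[x\<^sub>2, x\<^sub>1]\<close> \<open>R\<close>-combinations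
of \<open>x\<^sub>1, x\<^sub>2\<close>. When \<open>H\<close> is commutative, \<open>x\<^sub>1\<^sup>p\<close> comes from Frobenius. Otherwise
\<open>[t\<^sub>2, t\<^sub>1]\<close> is a nonzero primitive element and \<open>ad(z)\<^sup>p = ad(z\<^sup>p)\<close> in characteristic \<open>p\<close>
forces \<open>z\<^sup>p = \<kappa>\<^sup>p\<^sup>-\<^sup>1 z\<close> for every primitive \<open>z\<close>; the hypothesis \<open>v(\<theta>) \<le> j\<close> then makes \<open>\<kappa>\<close>
integral. Consequently \<open>R[x\<^sub>1, x\<^sub>2]\<close> is the \<open>R\<close>-span of the \<open>p\<^sup>2\<close> monomials \<open>x\<^sub>1\<^sup>a x\<^sub>2\<^sup>b\<close>
(\<open>a, b < p\<close>), which span \<open>H\<close> and hence, by the rank hypothesis, form a \<open>K\<close>-basis. So an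
element \<open>u x\<^sub>1 + w x\<^sub>2\<close> lies in the order only if \<open>u, w \<in> R\<close>; applied to the generators of
the other order, in both directions, this gives \<open>i = i'\<close>, \<open>j = j'\<close> and \<open>v(\<theta> - \<theta>') \<ge> j\<close>.\<close>

lemma mat2_nth [simp]:
  "mat2 a b c d $ 1 $ 1 = a" "mat2 a b c d $ 1 $ 2 = b"
  "mat2 a b c d $ 2 $ 1 = c" "mat2 a b c d $ 2 $ 2 = d"
  by (simp_all add: mat2_def)

lemma mat2_eta: "(M :: 'a ^ 2 ^ 2) = mat2 (M$1$1) (M$1$2) (M$2$1) (M$2$2)"
  by (simp add: vec_eq_iff forall_2)

lemma mat2_eq_iff: "mat2 a b c d = mat2 a' b' c' d' \<longleftrightarrow> a = a' \<and> b = b' \<and> c = c' \<and> d = d'"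
  by (metis mat2_nth)

lemma mat2_mult: "mat2 a b c d ** mat2 e f g h =
   mat2 (a*e+b*g) (a*f+b*h) (c*e+d*g) (c*f+d*h :: 'a::semiring_1)"
  by (subst mat2_eta) (simp add: matrix_matrix_mult_def UNIV_2)

lemma mat2_one: "(mat 1 :: 'a::zero_neq_one ^2^2) = mat2 1 0 0 1"
  by (subst mat2_eta) (simp add: mat_def)

lemma entrywise_pow_mat2: "entrywise_pow (mat2 a b c d) p = mat2 (a^p) (b^p) (c^p) (d^p)"
  by (subst mat2_eta) (simp add: entrywise_pow_def)

lemma matrix_inv_unique:
  fixes M N :: "'a::semiring_1 ^ 'n ^ 'n"
  assumes "M ** N = mat 1" "N ** M = mat 1"
  shows "matrix_inv M = N"
proof -
  let ?I = "matrix_inv M"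
  have "M ** ?I = mat 1 \<and> ?I ** M = mat 1"
    unfolding matrix_inv_def by (rule someI[of _ N]) (simp add: assms)
  then have "?I = ?I ** (M ** N)" "(?I ** M) ** N = N" using assms by simp_all
  then show ?thesis by (simp add: matrix_mul_assoc)
qed

lemma matrix_inv_mat2_lower_triangular:
  fixes a c d :: "'a::field"
  assumes "a \<noteq> 0" "d \<noteq> 0"
  shows "matrix_inv (mat2 a 0 c d) = mat2 (1/a) 0 (- c/(a*d)) (1/d)"
  using assms
  by (intro matrix_inv_unique) (simp_all add: mat2_mult mat2_one mat2_eq_iff field_simps)

text \<open>For lower triangular \<open>\<Theta>\<close>, the columns of \<open>\<Theta>\<^sup>-\<^sup>1 B \<Theta>\<^sup>(\<^sup>p\<^sup>)\<close> are the coordinates of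
\<open>P t\<^sub>1 + Q t\<^sub>2\<close> with respect to \<open>a t\<^sub>1 + \<theta> t\<^sub>2, d t\<^sub>2\<close>, namely \<open>(P/a, (Q - P\<theta>/a)/d)\<close>, where
\<open>(P, Q)\<close> is the corresponding column of \<open>B \<Theta>\<^sup>(\<^sup>p\<^sup>)\<close>.\<close>

lemma lower_triangular_twisted_conjugate:
  fixes a \<theta> d :: "'a::field"
  assumes "a \<noteq> 0" "d \<noteq> 0" "p > 0"
  shows "matrix_inv (mat2 a 0 \<theta> d) ** B ** entrywise_pow (mat2 a 0 \<theta> d) p =
    mat2 ((a^p * B$1$1 + \<theta>^p * B$1$2) / a) (d^p * B$1$2 / a)
      ((a^p * B$2$1 + \<theta>^p * B$2$2 - (a^p * B$1$1 + \<theta>^p * B$1$2) * \<theta> / a) / d)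
      ((d^p * B$2$2 - d^p * B$1$2 * \<theta> / a) / d)"
proof -
  obtain b11 b12 b21 b22 where "B = mat2 b11 b12 b21 b22" using mat2_eta by blast
  then show ?thesis using assms
    by (simp add: matrix_inv_mat2_lower_triangular entrywise_pow_mat2 mat2_mult mat2_eq_iff
        field_simps)
qed

section \<open>Discrete valuations\<close>

locale discrete_valuation =
  fixes v :: "'k::field \<Rightarrow> int"
  assumes normalized: "normalized_discrete_valuation v"
begin

lemma v_mult: "x \<noteq> 0 \<Longrightarrow> y \<noteq> 0 \<Longrightarrow> v (x * y) = v x + v y"
  using normalized unfolding normalized_discrete_valuation_def by blast

lemma v_add: "x \<noteq> 0 \<Longrightarrow> y \<noteq> 0 \<Longrightarrow> x + y \<noteq> 0 \<Longrightarrow> min (v x) (v y) \<le> v (x + y)"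
  using normalized unfolding normalized_discrete_valuation_def by blast

lemma v_one [simp]: "v 1 = 0"
  using v_mult[of 1 1] by simp

lemma v_inverse: "x \<noteq> 0 \<Longrightarrow> v (inverse x) = - v x"
  using v_mult[of x "inverse x"] by simp

lemma v_divide: "x \<noteq> 0 \<Longrightarrow> y \<noteq> 0 \<Longrightarrow> v (x / y) = v x - v y"
  by (simp add: divide_inverse v_mult v_inverse)

lemma v_minus [simp]: "v (- x) = v x"
proof (cases "x = 0")
  case False
  then show ?thesis using v_mult[of "-x" "-x"] v_mult[of x x] by simp
qed simp

lemma v_power: "x \<noteq> 0 \<Longrightarrow> v (x ^ n) = int n * v x"
  by (induction n) (simp_all add: v_mult algebra_simps)

lemma v_powi: "x \<noteq> 0 \<Longrightarrow> v (x powi k) = k * v x"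
  by (cases "k \<ge> 0") (simp_all add: power_int_def v_power v_inverse)

lemma v_diff_eq_left:
  assumes "x \<noteq> 0" "y \<noteq> 0" "v x < v y"
  shows "x - y \<noteq> 0" "v (x - y) = v x"
proof -
  show xy: "x - y \<noteq> 0" using assms by auto
  have "min (v (x - y)) (v y) \<le> v x"
    using v_add[of "x - y" y] xy assms by simp
  moreover have "min (v x) (v (-y)) \<le> v (x - y)"
    using v_add[of x "-y"] xy assms by simp
  ultimately show "v (x - y) = v x" using assms v_minus[of y] by linarith
qed

lemma vK_ge_minus_commute: "vK_ge v (y - x) n \<longleftrightarrow> vK_ge v (x - y) n"
  using v_minus[of "x - y"] by (auto simp: vK_ge_def)

lemma mem_val_ring_iff: "x \<in> val_ring v \<longleftrightarrow> x = 0 \<or> 0 \<le> v x"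
  unfolding val_ring_def vK_ge_def by simp

lemma val_ring_zero [simp]: "0 \<in> val_ring v" and val_ring_one [simp]: "1 \<in> val_ring v"
  by (simp_all add: mem_val_ring_iff)

lemma val_ring_mult: "x \<in> val_ring v \<Longrightarrow> y \<in> val_ring v \<Longrightarrow> x * y \<in> val_ring v"
  unfolding mem_val_ring_iff by (cases "x = 0"; cases "y = 0") (auto simp: v_mult)

lemma val_ring_add:
  assumes "x \<in> val_ring v" "y \<in> val_ring v"
  shows "x + y \<in> val_ring v"
proof (cases "x = 0 \<or> y = 0 \<or> x + y = 0")
  case False
  then have "min (v x) (v y) \<le> v (x + y)" using v_add by blast
  then show ?thesis using assms False unfolding mem_val_ring_iff by linarith
qed (use assms in auto)

lemma val_ring_uminus: "x \<in> val_ring v \<Longrightarrow> - x \<in> val_ring v"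
  unfolding mem_val_ring_iff by simp

lemma val_ring_power: "x \<in> val_ring v \<Longrightarrow> x ^ n \<in> val_ring v"
  by (induction n) (simp_all add: val_ring_mult)

lemma val_ring_of_power:
  assumes "x ^ n \<in> val_ring v" "n \<ge> 1"
  shows "x \<in> val_ring v"
proof (cases "x = 0")
  case False
  then have "0 \<le> int n * v x" using assms v_power[of x n] unfolding mem_val_ring_iff by simp
  then show ?thesis using assms(2) False unfolding mem_val_ring_iff by (simp add: zero_le_mult_iff)
qed simp

text \<open>If \<open>\<delta>\<close> were not integral, \<open>\<delta>\<^sup>n\<close> would dominate \<open>\<beta>\<^sup>n\<close>, and the factor \<open>\<theta>/d\<close> of
non-positive valuation could not make up for the negative valuation of \<open>\<delta>\<^sup>n\<close>.\<close>

lemma val_ring_of_scaled_power_diff: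
  assumes \<theta>: "\<theta> \<noteq> 0" "v \<theta> \<le> v d" and d: "d \<noteq> 0"
    and \<beta>: "\<beta> \<in> val_ring v" and n: "n \<ge> 1"
    and scaled: "\<theta> / d * (\<delta> ^ n - \<beta> ^ n) \<in> val_ring v"
  shows "\<delta> \<in> val_ring v"
proof (rule ccontr)
  assume "\<delta> \<notin> val_ring v"
  then have \<delta>: "\<delta> \<noteq> 0" "v \<delta> < 0" by (auto simp: mem_val_ring_iff)
  then have \<delta>n: "\<delta> ^ n \<noteq> 0" "v (\<delta> ^ n) \<le> v \<delta>"
    using v_power[of \<delta> n] n mult_right_mono_neg[of 1 "int n" "v \<delta>"] by simp_all
  have diff: "\<delta> ^ n - \<beta> ^ n \<noteq> 0 \<and> v (\<delta> ^ n - \<beta> ^ n) = v (\<delta> ^ n)"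
  proof (cases "\<beta> = 0")
    case False
    have "0 \<le> v (\<beta> ^ n)" using val_ring_power[OF \<beta>, of n] False unfolding mem_val_ring_iff by simp
    then show ?thesis using v_diff_eq_left[OF \<delta>n(1), of "\<beta> ^ n"] False \<delta> \<delta>n by simp
  qed (use \<delta>n n in \<open>simp add: zero_power\<close>)
  have "v (\<theta> / d * (\<delta> ^ n - \<beta> ^ n)) = v \<theta> - v d + v (\<delta> ^ n)"
    using diff \<theta> d by (simp add: v_mult v_divide)
  also have "\<dots> < 0" using \<theta> \<delta> \<delta>n by linarith
  finally show False using scaled diff \<theta> d unfolding mem_val_ring_iff by simp
qed

end

locale uniformized_valuation = discrete_valuation v for v :: "'k::field \<Rightarrow> int" +
  fixes \<pi> :: 'k
  assumes uniformizer: "\<pi> \<noteq> 0" "v \<pi> = 1"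
begin

lemma v_powi_uniformizer [simp]: "v (\<pi> powi k) = k"
  using v_powi[of \<pi> k] uniformizer by simp

lemma divide_powi_mem_val_ring_iff: "x / \<pi> powi k \<in> val_ring v \<longleftrightarrow> vK_ge v x k"
  using uniformizer by (cases "x = 0") (auto simp: mem_val_ring_iff vK_ge_def v_divide)

lemma powi_divide_powi_mem_val_ring_iff: "\<pi> powi k' / \<pi> powi k \<in> val_ring v \<longleftrightarrow> k \<le> k'"
  using uniformizer by (simp add: divide_powi_mem_val_ring_iff vK_ge_def)

end

lemma pascal_sum:
  fixes u :: "nat \<Rightarrow> nat \<Rightarrow> 'a::semiring_1"
  shows "(\<Sum>k\<le>n. of_nat (n choose k) * u (Suc k) (n - k)) + (\<Sum>k\<le>n. of_nat (n choose k) * u k (Suc n - k))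
   = (\<Sum>k\<le>Suc n. of_nat (Suc n choose k) * u k (Suc n - k))"
proof -
  have R: "(\<Sum>k\<le>Suc n. of_nat (Suc n choose k) * u k (Suc n - k)) =
     u 0 (Suc n) + (\<Sum>k\<le>n. of_nat (n choose k) * u (Suc k) (n - k))
       + (\<Sum>k\<le>n. of_nat (n choose Suc k) * u (Suc k) (n - k))"
    by (subst sum.atMost_Suc_shift) (simp add: distrib_right sum.distrib add.assoc del: sum.atMost_Suc)
  have "(\<Sum>k\<le>n. of_nat (n choose k) * u k (Suc n - k)) =
        (\<Sum>k\<le>Suc n. of_nat (n choose k) * u k (Suc n - k))"
    by (simp add: binomial_eq_0)
  also have "\<dots> = u 0 (Suc n) + (\<Sum>k\<le>n. of_nat (n choose Suc k) * u (Suc k) (n - k))"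
    by (subst sum.atMost_Suc_shift) (simp del: sum.atMost_Suc)
  finally show ?thesis unfolding R by (simp add: algebra_simps)
qed

lemma prime_binomial_sum:
  fixes u :: "nat \<Rightarrow> nat \<Rightarrow> 'a::semiring_1"
  assumes p: "prime p" and char: "of_nat p = (0::'a)"
  shows "(\<Sum>k\<le>p. of_nat (p choose k) * u k (p - k)) = u 0 p + u p 0"
proof -
  have "of_nat (p choose k) = (0::'a)" if "0 < k" "k < p" for k
  proof -
    have "p dvd p choose k" using dvd_choose_prime[of k p] that p by simp
    then obtain m where "p choose k = p * m" by blast
    then show ?thesis using char by simp
  qed
  then have "(\<Sum>k\<le>p. of_nat (p choose k) * u k (p - k)) =
        (\<Sum>k\<in>{0, p}. of_nat (p choose k) * u k (p - k))"
    by (intro sum.mono_neutral_right) auto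
  also have "\<dots> = u 0 p + u p 0" using prime_gt_0_nat[OF p] by simp
  finally show ?thesis .
qed

section \<open>Ring identities in characteristic \<open>p\<close>\<close>

lemma minus_one_power_commute: "(-1) ^ k * (x::'a::ring_1) = x * (-1) ^ k"
  by (induction k) (simp_all add: mult.assoc)

lemma commutator_iterate_binomial:
  fixes z y :: "'a::ring_1"
  shows "((\<lambda>w. z * w - w * z) ^^ n) y =
     (\<Sum>k\<le>n. of_nat (n choose k) * ((-1) ^ k * (z ^ (n - k) * y * z ^ k)))"
proof (induction n)
  case (Suc n)
  define u where "u k m = (-1) ^ k * (z ^ m * y * z ^ k)" for k m
  have left: "z * (of_nat c * u k m) = of_nat c * u k (Suc m)" for c k m
  proof -
    have "z * (of_nat c * w) = of_nat c * (z * w)" "z * ((-1) ^ k * w) = (-1) ^ k * (z * w)" for w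
      by (metis mult.assoc mult_of_nat_commute, metis mult.assoc minus_one_power_commute)
    then show ?thesis unfolding u_def by (simp add: mult.assoc)
  qed
  have right: "(of_nat c * u k m) * z = - (of_nat c * u (Suc k) m)" for c k m
    unfolding u_def by (simp add: mult.assoc power_commutes)
  have "((\<lambda>w. z * w - w * z) ^^ Suc n) y =
     z * (\<Sum>k\<le>n. of_nat (n choose k) * u k (n - k)) - (\<Sum>k\<le>n. of_nat (n choose k) * u k (n - k)) * z"
    using Suc.IH unfolding u_def by simp
  also have "\<dots> = (\<Sum>k\<le>n. of_nat (n choose k) * u k (Suc n - k))
      + (\<Sum>k\<le>n. of_nat (n choose k) * u (Suc k) (n - k))"
    unfolding sum_distrib_left sum_distrib_right
    by (simp add: left right Suc_diff_le sum_negf)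
  also have "\<dots> = (\<Sum>k\<le>Suc n. of_nat (Suc n choose k) * u k (Suc n - k))"
    using pascal_sum[of n u] by (simp add: add.commute)
  finally show ?case unfolding u_def .
qed simp

lemma commutator_iterate_prime:
  fixes z y :: "'a::ring_1"
  assumes p: "prime p" and char: "of_nat p = (0::'a)"
  shows "((\<lambda>w. z * w - w * z) ^^ p) y = z ^ p * y - y * z ^ p"
proof -
  have "(-1) ^ p = (-1 :: 'a)"
  proof (cases "p = 2")
    case True
    then have "(1::'a) = -1" using char by (simp add: eq_neg_iff_add_eq_0 one_add_one)
    then show ?thesis using True by (metis power2_minus power_one)
  next
    case False
    then have "odd p" using prime_odd_nat[OF p] p prime_ge_2_nat[OF p] by auto
    then show ?thesis by simp
  qed
  then show ?thesis
    using commutator_iterate_binomial[where n=p and z=z and y=y]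
      prime_binomial_sum[OF p char, of "\<lambda>k m. (-1) ^ k * (z ^ m * y * z ^ k)"]
    by simp
qed

lemma commuting_binomial:
  fixes a b :: "'a::ring_1"
  assumes ab: "a * b = b * a"
  shows "(a + b) ^ n = (\<Sum>k\<le>n. of_nat (n choose k) * (a ^ k * b ^ (n - k)))"
proof (induction n)
  case (Suc n)
  have of_nat_left: "x * (of_nat c * w) = of_nat c * (x * w)" for x w :: 'a and c
    by (metis mult.assoc mult_of_nat_commute)
  have b_left: "b * (a ^ k * w) = a ^ k * (b * w)" for k w
    by (metis ab mult.assoc power_commuting_commutes)
  have "(a + b) ^ Suc n = a * (a + b) ^ n + b * (a + b) ^ n" by (simp add: distrib_right)
  also have "\<dots> = (\<Sum>k\<le>n. of_nat (n choose k) * (a ^ Suc k * b ^ (n - k)))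
     + (\<Sum>k\<le>n. of_nat (n choose k) * (a ^ k * b ^ (Suc n - k)))"
    unfolding Suc.IH sum_distrib_left
    by (simp add: of_nat_left b_left mult.assoc Suc_diff_le)
  also have "\<dots> = (\<Sum>k\<le>Suc n. of_nat (Suc n choose k) * (a ^ k * b ^ (Suc n - k)))"
    using pascal_sum[of n "\<lambda>k m. a ^ k * b ^ m"] by simp
  finally show ?case .
qed simp

lemma commuting_frobenius:
  fixes a b :: "'a::ring_1"
  assumes "a * b = b * a" and "prime p" and "of_nat p = (0::'a)"
  shows "(a + b) ^ p = a ^ p + b ^ p"
  using commuting_binomial[OF assms(1), of p] prime_binomial_sum[OF assms(2,3), of "\<lambda>k m. a ^ k * b ^ m"]
  by (simp add: add.commute)

section \<open>Primitive elements of a Hopf algebra\<close>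

definition tensor_apply :: "('h \<Rightarrow> 'h \<Rightarrow> 'k::field) \<Rightarrow> ('h \<times> 'h) list \<Rightarrow> 'k" where
  "tensor_apply f xs = (\<Sum>(a, b)\<leftarrow>xs. f a b)"

lemma tensor_apply_Nil [simp]: "tensor_apply f [] = 0"
  and tensor_apply_Cons [simp]: "tensor_apply f ((a, b) # xs) = f a b + tensor_apply f xs"
  and tensor_apply_append [simp]: "tensor_apply f (xs @ ys) = tensor_apply f xs + tensor_apply f ys"
  by (simp_all add: tensor_apply_def)

lemma tensor_apply_cong: "(\<And>a b. f a b = g a b) \<Longrightarrow> tensor_apply f xs = tensor_apply g xs"
  by (simp add: tensor_apply_def)

lemma tensor_apply_product:
  "tensor_apply f (concat (map (\<lambda>(a, b). map (\<lambda>(c, d). (a * c, b * d)) ys) xs)) =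
   tensor_apply (\<lambda>a b. tensor_apply (\<lambda>c d. f (a * c) (b * d)) ys) xs"
proof (induction xs)
  case (Cons x xs)
  obtain a b where x: "x = (a, b)" by (cases x)
  have "tensor_apply f (map (\<lambda>(c, d). (a * c, b * d)) ys) = tensor_apply (\<lambda>c d. f (a * c) (b * d)) ys"
    by (induction ys) auto
  then show ?case using Cons x by simp
qed simp

locale hopf =
  fixes \<phi> :: "'k::field \<Rightarrow> 'h::ring_1" and \<Delta> :: "'h \<Rightarrow> ('h \<times> 'h) list"
    and \<epsilon> :: "'h \<Rightarrow> 'k" and S :: "'h \<Rightarrow> 'h"
  assumes hopf: "hopf_algebra \<phi> \<Delta> \<epsilon> S"
begin

lemma K_algebra: "K_algebra \<phi>"
  using hopf unfolding hopf_algebra_def by blast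

lemma phi_one [simp]: "\<phi> 1 = 1"
  and phi_add: "\<phi> (a + b) = \<phi> a + \<phi> b"
  and phi_mult: "\<phi> (a * b) = \<phi> a * \<phi> b"
  and phi_central: "\<phi> a * x = x * \<phi> a"
  using K_algebra unfolding K_algebra_def by blast+

lemma phi_zero [simp]: "\<phi> 0 = 0"
  using phi_add[of 0 0] by simp

lemma phi_minus: "\<phi> (- a) = - \<phi> a"
  using phi_add[of a "-a"] by (simp add: eq_neg_iff_add_eq_0 add.commute)

lemma phi_diff: "\<phi> (a - b) = \<phi> a - \<phi> b"
  using phi_add[of a "-b"] by (simp add: phi_minus)

lemma phi_of_nat [simp]: "\<phi> (of_nat n) = of_nat n"
  by (induction n) (simp_all add: phi_add)

lemma phi_smult_smult: "\<phi> x * (\<phi> y * w) = \<phi> (x * y) * w"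
  by (simp add: phi_mult mult.assoc)

lemma mult_phi_smult: "x * (\<phi> a * y) = \<phi> a * (x * y)"
  by (metis mult.assoc phi_central)

lemma smult_mult_smult: "(\<phi> x * u) * (\<phi> y * w) = \<phi> (x * y) * (u * w)"
  by (simp only: mult.assoc mult_phi_smult[of u] phi_smult_smult)

lemma smult_power: "(\<phi> c * x) ^ n = \<phi> (c ^ n) * x ^ n"
  by (induction n) (simp_all only: power_0 phi_one mult_1 power_Suc smult_mult_smult)

lemma smult_eq_zero:
  assumes "g \<noteq> 0" "\<phi> x * g = 0" shows "x = 0"
proof (rule ccontr)
  assume "x \<noteq> 0"
  then have "g = \<phi> (inverse x) * (\<phi> x * g)" by (simp add: phi_smult_smult)
  then show False using assms by simp
qed

sublocale V: vector_space "\<lambda>c x. \<phi> c * x"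
  by unfold_locales (simp_all add: distrib_left distrib_right phi_add phi_smult_smult)

abbreviation bilinear :: "('h \<Rightarrow> 'h \<Rightarrow> 'k) \<Rightarrow> bool" where
  "bilinear f \<equiv> K_bilinear_form \<phi> f"

lemma bilinearD:
  assumes "bilinear f"
  shows "f (x + y) z = f x z + f y z" "f (\<phi> c * x) z = c * f x z"
    "f x (y + z) = f x y + f x z" "f x (\<phi> c * y) = c * f x y"
  using assms unfolding K_bilinear_form_def K_linear_form_def by blast+

lemma bilinearI:
  assumes "\<And>x y z. f (x + y) z = f x z + f y z" "\<And>c x z. f (\<phi> c * x) z = c * f x z"
    "\<And>x y z. f x (y + z) = f x y + f x z" "\<And>c x y. f x (\<phi> c * y) = c * f x y"
  shows "bilinear f"
  using assms unfolding K_bilinear_form_def K_linear_form_def by blast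

lemma bilinear_diff:
  assumes "bilinear f" shows "f (x - y) z = f x z - f y z" "f z (x - y) = f z x - f z y"
  using bilinearD(1)[OF assms, of x "- y" z] bilinearD(3)[OF assms, of z x "- y"]
    bilinearD(2)[OF assms, of "-1" y z] bilinearD(4)[OF assms, of z "-1" y]
  by (simp_all add: phi_minus)

lemma bilinear_compose: "bilinear f \<Longrightarrow> bilinear (\<lambda>a b. f (u * a * c) (w * b * d))"
  using bilinearD[of f]
  by (intro bilinearI) (simp_all add: distrib_left distrib_right mult_phi_smult mult.assoc)

lemma bilinear_mult_left: "bilinear f \<Longrightarrow> bilinear (\<lambda>c d. f (a * c) (b * d))"
  using bilinear_compose[of f a 1 b 1] by simp

lemma bilinear_mult_right: "bilinear f \<Longrightarrow> bilinear (\<lambda>a b. f (a * c) (b * d))"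
  using bilinear_compose[of f 1 c 1 d] by simp

lemma bilinear_add: "bilinear f \<Longrightarrow> bilinear g \<Longrightarrow> bilinear (\<lambda>a b. f a b + g a b)"
  using bilinearD[of f] bilinearD[of g] by (intro bilinearI) (simp_all add: algebra_simps)

lemma bilinear_scale: "bilinear f \<Longrightarrow> bilinear (\<lambda>a b. k * f a b)"
  using bilinearD[of f] by (intro bilinearI) (simp_all add: algebra_simps)

lemma bilinear_sum: "(\<And>k. bilinear (F k)) \<Longrightarrow> bilinear (\<lambda>a b. \<Sum>k\<le>(n::nat). F k a b)"
  by (induction n) (simp_all add: bilinear_add)

lemma tensor_apply_eq: "tensor_eq \<phi> xs ys \<Longrightarrow> bilinear f \<Longrightarrow> tensor_apply f xs = tensor_apply f ys"
  unfolding tensor_eq_def tensor_apply_def by blast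

lemma comult_add: "tensor_eq \<phi> (\<Delta> (x + y)) (\<Delta> x @ \<Delta> y)"
  and comult_smult: "tensor_eq \<phi> (\<Delta> (\<phi> c * x)) (map (\<lambda>(a, b). (\<phi> c * a, b)) (\<Delta> x))"
  and comult_one: "tensor_eq \<phi> (\<Delta> 1) [(1, 1)]"
  and comult_mult: "tensor_eq \<phi> (\<Delta> (x * y))
        (concat (map (\<lambda>(a, b). map (\<lambda>(c, d). (a * c, b * d)) (\<Delta> y)) (\<Delta> x)))"
  using hopf unfolding hopf_algebra_def by blast+

lemma tensor_apply_comult_add:
  "bilinear f \<Longrightarrow> tensor_apply f (\<Delta> (x + y)) = tensor_apply f (\<Delta> x) + tensor_apply f (\<Delta> y)"
  using tensor_apply_eq[OF comult_add] by simp

lemma tensor_apply_smult_left: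
  "bilinear f \<Longrightarrow> tensor_apply f (map (\<lambda>(a, b). (\<phi> c * a, b)) xs) = c * tensor_apply f xs"
  by (induction xs) (auto simp: bilinearD(2) algebra_simps)

lemma tensor_apply_comult_smult:
  "bilinear f \<Longrightarrow> tensor_apply f (\<Delta> (\<phi> c * x)) = c * tensor_apply f (\<Delta> x)"
  using tensor_apply_eq[OF comult_smult] tensor_apply_smult_left by metis

lemma tensor_apply_comult_one: "bilinear f \<Longrightarrow> tensor_apply f (\<Delta> 1) = f 1 1"
  using tensor_apply_eq[OF comult_one] by simp

lemma tensor_apply_comult_mult:
  "bilinear f \<Longrightarrow> tensor_apply f (\<Delta> (x * y)) =
     tensor_apply (\<lambda>a b. tensor_apply (\<lambda>c d. f (a * c) (b * d)) (\<Delta> y)) (\<Delta> x)"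
  using tensor_apply_eq[OF comult_mult] tensor_apply_product by metis

lemma Prim_iff:
  "t \<in> Prim \<phi> \<Delta> \<longleftrightarrow> (\<forall>f. bilinear f \<longrightarrow> tensor_apply f (\<Delta> t) = f t 1 + f 1 t)"
  unfolding Prim_def primitive_def tensor_eq_def tensor_apply_def by simp

lemma PrimD: "t \<in> Prim \<phi> \<Delta> \<Longrightarrow> bilinear f \<Longrightarrow> tensor_apply f (\<Delta> t) = f t 1 + f 1 t"
  using Prim_iff by blast

lemma Prim_add: "x \<in> Prim \<phi> \<Delta> \<Longrightarrow> y \<in> Prim \<phi> \<Delta> \<Longrightarrow> x + y \<in> Prim \<phi> \<Delta>"
  unfolding Prim_iff by (simp add: tensor_apply_comult_add bilinearD)

lemma Prim_smult: "x \<in> Prim \<phi> \<Delta> \<Longrightarrow> \<phi> c * x \<in> Prim \<phi> \<Delta>"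
  unfolding Prim_iff by (simp add: tensor_apply_comult_smult bilinearD distrib_left)

lemma Prim_diff: "x \<in> Prim \<phi> \<Delta> \<Longrightarrow> y \<in> Prim \<phi> \<Delta> \<Longrightarrow> x - y \<in> Prim \<phi> \<Delta>"
  using Prim_add[of x "\<phi> (-1) * y"] Prim_smult[of y "-1"] by (simp add: phi_minus)

lemma tensor_apply_comult_Prim_mult:
  assumes x: "x \<in> Prim \<phi> \<Delta>" and y: "y \<in> Prim \<phi> \<Delta>" and f: "bilinear f"
  shows "tensor_apply f (\<Delta> (x * y)) = f (x * y) 1 + f x y + f y x + f 1 (x * y)"
proof -
  have "tensor_apply f (\<Delta> (x * y)) =
      tensor_apply (\<lambda>a b. tensor_apply (\<lambda>c d. f (a * c) (b * d)) (\<Delta> y)) (\<Delta> x)"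
    using tensor_apply_comult_mult[OF f] .
  also have "\<dots> = tensor_apply (\<lambda>a b. f (a * y) b + f a (b * y)) (\<Delta> x)"
    by (rule tensor_apply_cong) (simp add: PrimD[OF y bilinear_mult_left[OF f]])
  also have "\<dots> = f (x * y) 1 + f x y + (f y x + f 1 (x * y))"
    using PrimD[OF x bilinear_add[OF bilinear_mult_right[OF f, of y 1] bilinear_mult_right[OF f, of 1 y]]]
    by simp
  finally show ?thesis by (simp add: add.assoc)
qed

lemma Prim_commutator:
  assumes x: "x \<in> Prim \<phi> \<Delta>" and y: "y \<in> Prim \<phi> \<Delta>"
  shows "x * y - y * x \<in> Prim \<phi> \<Delta>"
  unfolding Prim_iff
proof (intro allI impI)
  fix f assume f: "bilinear f"
  have "x * y - y * x = x * y + \<phi> (-1) * (y * x)" by (simp add: phi_minus)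
  then have "tensor_apply f (\<Delta> (x * y - y * x)) =
      tensor_apply f (\<Delta> (x * y)) - tensor_apply f (\<Delta> (y * x))"
    by (simp only: tensor_apply_comult_add[OF f] tensor_apply_comult_smult[OF f]) simp
  then show "tensor_apply f (\<Delta> (x * y - y * x)) = f (x * y - y * x) 1 + f 1 (x * y - y * x)"
    using tensor_apply_comult_Prim_mult[OF x y f] tensor_apply_comult_Prim_mult[OF y x f]
    by (simp add: bilinear_diff[OF f])
qed

lemma tensor_apply_comult_Prim_power:
  assumes z: "z \<in> Prim \<phi> \<Delta>"
  shows "bilinear f \<Longrightarrow>
    tensor_apply f (\<Delta> (z ^ n)) = (\<Sum>k\<le>n. of_nat (n choose k) * f (z ^ k) (z ^ (n - k)))"
proof (induction n arbitrary: f)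
  case 0
  then show ?case by (simp add: tensor_apply_comult_one)
next
  case (Suc n)
  have f: "bilinear f" by fact
  let ?g = "\<lambda>a b. \<Sum>k\<le>n. of_nat (n choose k) * f (a * z ^ k) (b * z ^ (n - k))"
  have g: "bilinear ?g"
    by (intro bilinear_sum bilinear_scale bilinear_mult_right[OF f])
  have "tensor_apply f (\<Delta> (z ^ Suc n)) =
      tensor_apply (\<lambda>a b. tensor_apply (\<lambda>c d. f (a * c) (b * d)) (\<Delta> (z ^ n))) (\<Delta> z)"
    using tensor_apply_comult_mult[OF f, of z "z ^ n"] by simp
  also have "\<dots> = tensor_apply ?g (\<Delta> z)"
    by (rule tensor_apply_cong) (simp add: Suc.IH[OF bilinear_mult_left[OF f]])
  also have "\<dots> = (\<Sum>k\<le>n. of_nat (n choose k) * f (z ^ Suc k) (z ^ (n - k)))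
       + (\<Sum>k\<le>n. of_nat (n choose k) * f (z ^ k) (z ^ (Suc n - k)))"
  proof -
    have "(\<Sum>k\<le>n. of_nat (n choose k) * f (z ^ k) (z * z ^ (n - k))) =
        (\<Sum>k\<le>n. of_nat (n choose k) * f (z ^ k) (z ^ (Suc n - k)))"
      by (rule sum.cong) (simp_all add: Suc_diff_le)
    then show ?thesis using PrimD[OF z g] by (simp add: power_commutes)
  qed
  also have "\<dots> = (\<Sum>k\<le>Suc n. of_nat (Suc n choose k) * f (z ^ k) (z ^ (Suc n - k)))"
    using pascal_sum[of n "\<lambda>a b. f (z ^ a) (z ^ b)"] by simp
  finally show ?case .
qed

lemma Prim_power_prime:
  assumes "prime p" "of_nat p = (0::'k)" and z: "z \<in> Prim \<phi> \<Delta>"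
  shows "z ^ p \<in> Prim \<phi> \<Delta>"
  unfolding Prim_iff
proof (intro allI impI)
  fix f assume f: "bilinear f"
  show "tensor_apply f (\<Delta> (z ^ p)) = f (z ^ p) 1 + f 1 (z ^ p)"
    using tensor_apply_comult_Prim_power[OF z f, of p]
      prime_binomial_sum[OF assms(1,2), of "\<lambda>a b. f (z ^ a) (z ^ b)"]
    by (simp add: add.commute)
qed

lemma commutator_lin_comb:
  "(\<phi> \<alpha> * x + \<phi> \<beta> * y) * (\<phi> a * x + \<phi> b * y) - (\<phi> a * x + \<phi> b * y) * (\<phi> \<alpha> * x + \<phi> \<beta> * y)
   = \<phi> (\<beta> * a - \<alpha> * b) * (y * x - x * y)"
proof -
  have "(\<phi> \<alpha> * x + \<phi> \<beta> * y) * (\<phi> a * x + \<phi> b * y) =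
      \<phi> (\<alpha> * a) * (x * x) + (\<phi> (\<beta> * a) * (y * x) + (\<phi> (\<alpha> * b) * (x * y) + \<phi> (\<beta> * b) * (y * y)))"
    "(\<phi> a * x + \<phi> b * y) * (\<phi> \<alpha> * x + \<phi> \<beta> * y) =
      \<phi> (a * \<alpha>) * (x * x) + (\<phi> (b * \<alpha>) * (y * x) + (\<phi> (a * \<beta>) * (x * y) + \<phi> (b * \<beta>) * (y * y)))"
    "\<phi> (\<beta> * a - \<alpha> * b) * (y * x - x * y) =
      \<phi> (\<beta> * a) * (y * x) - \<phi> (\<alpha> * b) * (y * x) - (\<phi> (\<beta> * a) * (x * y) - \<phi> (\<alpha> * b) * (x * y))"
    by (simp_all only: distrib_left distrib_right smult_mult_smult add.assoc phi_diff
        right_diff_distrib left_diff_distrib)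
  then show ?thesis
    unfolding mult.commute[of a \<alpha>] mult.commute[of b \<alpha>] mult.commute[of a \<beta>] mult.commute[of b \<beta>]
    by (simp add: algebra_simps)
qed

end

section \<open>Linear spans with coefficients in a subring\<close>

definition is_subring :: "'k::field set \<Rightarrow> bool" where
  "is_subring A \<longleftrightarrow> 0 \<in> A \<and> 1 \<in> A \<and> (\<forall>x\<in>A. \<forall>y\<in>A. x + y \<in> A \<and> x * y \<in> A) \<and> (\<forall>x\<in>A. - x \<in> A)"

lemma is_subring_UNIV: "is_subring UNIV"
  by (simp add: is_subring_def)

lemma (in discrete_valuation) is_subring_val_ring: "is_subring (val_ring v)"
  unfolding is_subring_def by (simp add: val_ring_add val_ring_mult val_ring_uminus)

lemma subalg_gen_subset:
  assumes "S \<subseteq> subalg_gen A T"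
  shows "subalg_gen A S \<subseteq> subalg_gen A T"
proof
  fix h assume "h \<in> subalg_gen A S"
  then show "h \<in> subalg_gen A T"
    by (induction rule: subalg_gen.induct) (use assms in \<open>auto intro: subalg_gen.intros\<close>)
qed

context hopf
begin

inductive_set module_span :: "'k set \<Rightarrow> 'h set \<Rightarrow> 'h set" for A G where
  zero: "0 \<in> module_span A G"
| smult: "c \<in> A \<Longrightarrow> g \<in> G \<Longrightarrow> \<phi> c * g \<in> module_span A G"
| add: "x \<in> module_span A G \<Longrightarrow> y \<in> module_span A G \<Longrightarrow> x + y \<in> module_span A G"

lemma module_span_smult:
  assumes A: "is_subring A" and c: "c \<in> A" and x: "x \<in> module_span A G"
  shows "\<phi> c * x \<in> module_span A G"
  using x
proof (induction rule: module_span.induct)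
  case (smult c' g)
  have "c * c' \<in> A" using A c smult unfolding is_subring_def by blast
  then show ?case using module_span.smult[OF _ smult(2)] by (simp add: phi_smult_smult)
qed (simp_all add: distrib_left module_span.intros)

lemma module_span_mult_left:
  assumes A: "is_subring A" and G: "\<And>g. g \<in> G \<Longrightarrow> s * g \<in> module_span A G"
    and x: "x \<in> module_span A G"
  shows "s * x \<in> module_span A G"
  using x
proof (induction rule: module_span.induct)
  case (smult c g)
  then show ?case using module_span_smult[OF A smult(1) G[OF smult(2)]] by (simp add: mult_phi_smult)
qed (simp_all add: distrib_left module_span.intros)

lemma module_span_base: "is_subring A \<Longrightarrow> g \<in> G \<Longrightarrow> g \<in> module_span A G"
  using module_span.smult[of 1 A g G] unfolding is_subring_def by simp

lemma module_span_uminus: "is_subring A \<Longrightarrow> x \<in> module_span A G \<Longrightarrow> - x \<in> module_span A G"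
  using module_span_smult[of A "-1" x G] unfolding is_subring_def by (simp add: phi_minus)

lemma module_span_subset_span: "module_span A G \<subseteq> V.span G"
proof
  fix x assume "x \<in> module_span A G"
  then show "x \<in> V.span G"
    by (induction rule: module_span.induct) (auto intro: V.span_zero V.span_add V.span_scale V.span_base)
qed

lemma sum_smult_single:
  assumes "finite G" "g \<in> G"
  shows "(\<Sum>g'\<in>G. \<phi> (if g' = g then u else 0) * g') = \<phi> u * g"
  using assms by (simp add: if_distrib[of "\<lambda>c. \<phi> c * _"] cong: if_cong)

lemma module_span_sum_repr:
  assumes A: "is_subring A" and G: "finite G" and x: "x \<in> module_span A G"
  obtains r where "\<And>g. r g \<in> A" "x = (\<Sum>g\<in>G. \<phi> (r g) * g)"
proof -
  have "\<exists>r. (\<forall>g. r g \<in> A) \<and> x = (\<Sum>g\<in>G. \<phi> (r g) * g)"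
    using x
  proof (induction rule: module_span.induct)
    case zero
    then show ?case using A unfolding is_subring_def by (intro exI[of _ "\<lambda>_. 0"]) simp
  next
    case (smult c g)
    then show ?case using A sum_smult_single[OF G smult(2), of c] unfolding is_subring_def
      by (intro exI[of _ "\<lambda>g'. if g' = g then c else 0"]) auto
  next
    case (add x y)
    then obtain r r' where "\<forall>g. r g \<in> A" "x = (\<Sum>g\<in>G. \<phi> (r g) * g)"
      "\<forall>g. r' g \<in> A" "y = (\<Sum>g\<in>G. \<phi> (r' g) * g)" by blast
    then show ?case using A unfolding is_subring_def
      by (intro exI[of _ "\<lambda>g. r g + r' g"]) (simp add: phi_add distrib_right sum.distrib)
  qed
  then show ?thesis using that by blast
qed

lemma K_rank_basis:
  assumes "K_rank \<phi> n"
  obtains E where "finite E" "card E = n" "V.independent E" "V.span E = UNIV"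
proof -
  obtain e :: "nat \<Rightarrow> 'h" where
    sp: "\<forall>x. \<exists>c. x = (\<Sum>k<n. \<phi> (c k) * e k)" and
    ind: "\<forall>c. (\<Sum>k<n. \<phi> (c k) * e k) = 0 \<longrightarrow> (\<forall>k<n. c k = 0)"
    using assms unfolding K_rank_def by blast
  have unit: "(\<Sum>m<n. \<phi> (if m = k then 1 else 0) * e m) = e k" if "k < n" for k
    using that by (simp add: if_distrib[of "\<lambda>c. \<phi> c * _"] cong: if_cong)
  have inj: "inj_on e {..<n}"
  proof (rule inj_onI, rule ccontr)
    fix k k' assume k: "k \<in> {..<n}" "k' \<in> {..<n}" "e k = e k'" "k \<noteq> k'"
    define c where "c m = (if m = k then 1 else 0) - (if m = k' then 1 else (0::'k))" for m
    have "(\<Sum>m<n. \<phi> (c m) * e m) = e k - e k'"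
      unfolding c_def using k(1,2) unit[of k] unit[of k']
      by (simp add: phi_diff left_diff_distrib sum_subtractf)
    then have "c k = 0" using ind k by simp
    then show False using k unfolding c_def by simp
  qed
  define E where "E = e ` {..<n}"
  have "V.independent E"
  proof (rule V.independent_if_scalars_zero)
    fix u x assume "(\<Sum>x\<in>E. \<phi> (u x) * x) = 0" "x \<in> E"
    then show "u x = 0"
      using ind unfolding E_def sum.reindex[OF inj] by auto
  qed (simp add: E_def)
  moreover have "V.span E = UNIV"
  proof -
    have "(\<Sum>k<n. \<phi> (c k) * e k) \<in> V.span E" for c
      unfolding E_def by (intro V.span_sum V.span_scale V.span_base) auto
    then show ?thesis using sp by (metis UNIV_eq_I)
  qed
  ultimately show ?thesis using that[of E] card_image[OF inj] unfolding E_def by simp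
qed

end

section \<open>Primitively generated Hopf algebras of rank \<open>p\<^sup>2\<close>\<close>

locale hopf_rank_p2 = hopf \<phi> \<Delta> \<epsilon> S
  for \<phi> :: "'k::field \<Rightarrow> 'h::ring_1" and \<Delta> \<epsilon> S +
  fixes p :: nat and t1 t2 :: 'h
  assumes prime: "prime p" and char: "of_nat p = (0::'k)"
    and rank: "K_rank \<phi> (p ^ 2)" and prim_gen: "primitively_generated \<phi> \<Delta>"
    and basis: "prim_basis \<phi> \<Delta> t1 t2"
begin

lemma p_gt_1: "1 < p"
  using prime prime_gt_1_nat by blast

lemma char_H: "(of_nat p :: 'h) = 0"
  using phi_of_nat[of p] char by simp

lemma t1_Prim: "t1 \<in> Prim \<phi> \<Delta>" and t2_Prim: "t2 \<in> Prim \<phi> \<Delta>"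
  using basis unfolding prim_basis_def by blast+

lemma Prim_obtain_coords:
  assumes "t \<in> Prim \<phi> \<Delta>" obtains a b where "t = \<phi> a * t1 + \<phi> b * t2"
  using basis assms unfolding prim_basis_def by blast

lemma lin_comb_eq_iff:
  "\<phi> a * t1 + \<phi> b * t2 = \<phi> a' * t1 + \<phi> b' * t2 \<longleftrightarrow> a = a' \<and> b = b'"
proof
  assume "\<phi> a * t1 + \<phi> b * t2 = \<phi> a' * t1 + \<phi> b' * t2"
  then have "\<phi> (a - a') * t1 + \<phi> (b - b') * t2 = 0"
    by (simp add: phi_diff algebra_simps)
  then show "a = a' \<and> b = b'" using basis unfolding prim_basis_def by fastforce
qed simp

lemma lin_comb_Prim: "\<phi> a * t1 + \<phi> b * t2 \<in> Prim \<phi> \<Delta>"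
  by (intro Prim_add Prim_smult t1_Prim t2_Prim)

text \<open>The commutators of \<open>a t\<^sub>1 + b t\<^sub>2\<close> with \<open>t\<^sub>1\<close> and \<open>t\<^sub>2\<close> are \<open>b [t\<^sub>2,t\<^sub>1]\<close> and
\<open>-a [t\<^sub>2,t\<^sub>1]\<close>.\<close>

lemma Prim_commuting_eq_zero:
  assumes g: "t2 * t1 - t1 * t2 \<noteq> 0" and c: "c \<in> Prim \<phi> \<Delta>"
    and c1: "c * t1 = t1 * c" and c2: "c * t2 = t2 * c"
  shows "c = 0"
proof -
  obtain a b where ab: "c = \<phi> a * t1 + \<phi> b * t2" using Prim_obtain_coords[OF c] .
  have "\<phi> b * (t2 * t1 - t1 * t2) = c * t1 - t1 * c"
    using commutator_lin_comb[of a t1 b t2 1 0] unfolding ab by simp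
  moreover have "\<phi> (- a) * (t2 * t1 - t1 * t2) = c * t2 - t2 * c"
    using commutator_lin_comb[of a t1 b t2 0 1] unfolding ab by simp
  ultimately have "b = 0" "- a = 0" using smult_eq_zero[OF g] c1 c2 by simp_all
  then show ?thesis using ab by simp
qed

lemma commutator_iterate_lin_comb:
  fixes \<alpha> \<beta> :: 'k
  assumes gexp: "t2 * t1 - t1 * t2 = \<phi> \<gamma>1 * t1 + \<phi> \<gamma>2 * t2"
  defines "z \<equiv> \<phi> \<alpha> * t1 + \<phi> \<beta> * t2" and "\<kappa> \<equiv> \<beta> * \<gamma>1 - \<alpha> * \<gamma>2"
  shows "((\<lambda>w. z * w - w * z) ^^ Suc n) (\<phi> a * t1 + \<phi> b * t2) =
    \<phi> (\<kappa> ^ n * (\<beta> * a - \<alpha> * b)) * (t2 * t1 - t1 * t2)"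
proof (induction n)
  case 0
  then show ?case unfolding z_def by (simp add: commutator_lin_comb)
next
  case (Suc n)
  let ?ad = "\<lambda>w. z * w - w * z" and ?g = "t2 * t1 - t1 * t2"
  have ad_smult: "?ad (\<phi> c * w) = \<phi> c * ?ad w" for c w
    by (simp only: mult_phi_smult mult.assoc right_diff_distrib)
  have ad_g: "?ad ?g = \<phi> \<kappa> * ?g"
    using commutator_lin_comb[of \<alpha> t1 \<beta> t2 \<gamma>1 \<gamma>2] unfolding z_def \<kappa>_def gexp[symmetric] .
  have "(?ad ^^ Suc (Suc n)) (\<phi> a * t1 + \<phi> b * t2) = ?ad (\<phi> (\<kappa> ^ n * (\<beta> * a - \<alpha> * b)) * ?g)"
    using Suc.IH by simp
  also have "\<dots> = \<phi> (\<kappa> ^ Suc n * (\<beta> * a - \<alpha> * b)) * ?g"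
    unfolding ad_smult ad_g phi_smult_smult by (simp add: ac_simps)
  finally show ?case .
qed

text \<open>In the non-commutative case every primitive \<open>z\<close> satisfies \<open>z\<^sup>p = \<kappa>\<^sup>p\<^sup>-\<^sup>1 z\<close>: by
\<open>ad(z\<^sup>p) = ad(z)\<^sup>p\<close>, the primitive element \<open>z\<^sup>p - \<kappa>\<^sup>p\<^sup>-\<^sup>1 z\<close> commutes with \<open>t\<^sub>1, t\<^sub>2\<close>.\<close>

lemma nonabelian_Prim_power:
  assumes g: "t2 * t1 - t1 * t2 \<noteq> 0"
    and gexp: "t2 * t1 - t1 * t2 = \<phi> \<gamma>1 * t1 + \<phi> \<gamma>2 * t2"
  shows "(\<phi> \<alpha> * t1 + \<phi> \<beta> * t2) ^ p =
    \<phi> ((\<beta> * \<gamma>1 - \<alpha> * \<gamma>2) ^ (p - 1)) * (\<phi> \<alpha> * t1 + \<phi> \<beta> * t2)"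
proof -
  define z where "z = \<phi> \<alpha> * t1 + \<phi> \<beta> * t2"
  define \<mu> where "\<mu> = (\<beta> * \<gamma>1 - \<alpha> * \<gamma>2) ^ (p - 1)"
  define c where "c = z ^ p - \<phi> \<mu> * z"
  have commutes: "c * y = y * c" if y: "y = \<phi> a * t1 + \<phi> b * t2" for y a b
  proof -
    have "z ^ p * y - y * z ^ p = ((\<lambda>w. z * w - w * z) ^^ Suc (p - 1)) y"
      using commutator_iterate_prime[OF prime char_H, of z y] p_gt_1 by simp
    also have "\<dots> = \<phi> \<mu> * (z * y - y * z)"
      using commutator_iterate_lin_comb[OF gexp] commutator_lin_comb[of \<alpha> t1 \<beta> t2 a b]
      unfolding y z_def \<mu>_def by (simp add: phi_smult_smult mult.commute)
    finally show ?thesis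
      unfolding c_def by (simp add: mult_phi_smult mult.assoc algebra_simps)
  qed
  have "c \<in> Prim \<phi> \<Delta>"
    unfolding c_def z_def by (intro Prim_diff Prim_power_prime prime char lin_comb_Prim Prim_smult)
  then have "c = 0"
    using Prim_commuting_eq_zero[OF g] commutes[of t1 1 0] commutes[of t2 0 1] by simp
  then show ?thesis unfolding c_def z_def \<mu>_def by simp
qed

definition monomials :: "'h \<Rightarrow> 'h \<Rightarrow> 'h set" where
  "monomials s1 s2 = (\<lambda>(a, b). s1 ^ a * s2 ^ b) ` ({..<p} \<times> {..<p})"

lemma monomialsI: "a < p \<Longrightarrow> b < p \<Longrightarrow> s1 ^ a * s2 ^ b \<in> monomials s1 s2"
  unfolding monomials_def by force

lemma finite_monomials: "finite (monomials s1 s2)"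
  unfolding monomials_def by simp

lemma card_monomials_le: "card (monomials s1 s2) \<le> p ^ 2"
  unfolding monomials_def power2_eq_square
  using card_image_le[of "{..<p} \<times> {..<p}" "\<lambda>(a, b). s1 ^ a * s2 ^ b"] by simp

lemma generators_in_monomials: "1 \<in> monomials s1 s2" "s1 \<in> monomials s1 s2" "s2 \<in> monomials s1 s2"
  using monomialsI[of 0 0 s1 s2] monomialsI[of 1 0 s1 s2] monomialsI[of 0 1 s1 s2] p_gt_1 by simp_all

text \<open>At most \<open>p\<^sup>2 = dim H\<close> monomials cannot span \<open>H\<close> unless they are independent.\<close>

lemma monomials_independent:
  assumes "UNIV \<subseteq> module_span UNIV (monomials s1 s2)"
  shows "V.independent (monomials s1 s2)"
proof -
  obtain E where E: "finite E" "card E = p ^ 2" "V.independent E" "V.span E = UNIV"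
    using K_rank_basis[OF rank] .
  interpret F: finite_dimensional_vector_space "\<lambda>c x. \<phi> c * x" E
    by (intro finite_dimensional_vector_space.intro V.vector_space_axioms
        finite_dimensional_vector_space_axioms.intro E)
  have "V.dim UNIV = p ^ 2" using V.dim_unique[of E UNIV] E by simp
  moreover have "UNIV \<subseteq> V.span (monomials s1 s2)"
    using assms module_span_subset_span by blast
  ultimately show ?thesis
    using card_monomials_le finite_monomials by (intro F.card_le_dim_spanning) auto
qed

lemma monomial_coords_unique:
  assumes indep: "V.independent (monomials s1 s2)" and "s1 \<noteq> s2"
    and sum: "(\<Sum>g\<in>monomials s1 s2. \<phi> (r g) * g) = \<phi> u * s1 + \<phi> w * s2"
  shows "r s1 = u" "r s2 = w"
proof -
  let ?M = "monomials s1 s2"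
  define r' where "r' g = r g - (if g = s1 then u else 0) - (if g = s2 then w else 0)" for g
  have "(\<Sum>g\<in>?M. \<phi> (r' g) * g) = (\<Sum>g\<in>?M. \<phi> (r g) * g)
      - (\<Sum>g\<in>?M. \<phi> (if g = s1 then u else 0) * g) - (\<Sum>g\<in>?M. \<phi> (if g = s2 then w else 0) * g)"
    unfolding r'_def by (simp add: phi_diff left_diff_distrib sum_subtractf)
  also have "\<dots> = 0"
    unfolding sum sum_smult_single[OF finite_monomials generators_in_monomials(2)]
      sum_smult_single[OF finite_monomials generators_in_monomials(3)] by simp
  finally have "\<forall>g\<in>?M. r' g = 0"
    using indep V.dependent_finite[OF finite_monomials] by blast
  then have "r' s1 = 0" "r' s2 = 0" using generators_in_monomials by blast+
  then show "r s1 = u" "r s2 = w" using \<open>s1 \<noteq> s2\<close> unfolding r'_def by auto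
qed

end

text \<open>If \<open>s\<^sub>1\<^sup>p\<close>, \<open>s\<^sub>2\<^sup>p\<close> and \<open>s\<^sub>2 s\<^sub>1 - s\<^sub>1 s\<^sub>2\<close> are \<open>A\<close>-combinations of \<open>s\<^sub>1, s\<^sub>2\<close>, the
\<open>A\<close>-span of the monomials \<open>s\<^sub>1\<^sup>a s\<^sub>2\<^sup>b\<close>, \<open>a, b < p\<close>, is closed under multiplication.\<close>

locale monomial_relations = hopf_rank_p2 \<phi> \<Delta> \<epsilon> S p t1 t2
  for \<phi> :: "'k::field \<Rightarrow> 'h::ring_1" and \<Delta> \<epsilon> S p t1 t2 +
  fixes A :: "'k set" and s1 s2 :: 'h and c11 c21 c12 c22 a1 a2 :: 'k
  assumes subring: "is_subring A"
    and coeffs: "c11 \<in> A" "c21 \<in> A" "c12 \<in> A" "c22 \<in> A" "a1 \<in> A" "a2 \<in> A"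
    and s1_power: "s1 ^ p = \<phi> c11 * s1 + \<phi> c21 * s2"
    and s2_power: "s2 ^ p = \<phi> c12 * s1 + \<phi> c22 * s2"
    and s2_s1: "s2 * s1 = s1 * s2 + \<phi> a1 * s1 + \<phi> a2 * s2"
begin

abbreviation L :: "'h set" where
  "L \<equiv> module_span A (monomials s1 s2)"

lemma L_base: "s1 ^ a * s2 ^ b \<in> L" if "a < p" "b < p"
  using module_span_base[OF subring monomialsI[OF that]] .

lemma generators_in_L: "1 \<in> L" "s1 \<in> L" "s2 \<in> L"
  using module_span_base[OF subring] generators_in_monomials by blast+

lemma L_lin_comb: "c \<in> A \<Longrightarrow> d \<in> A \<Longrightarrow> x \<in> L \<Longrightarrow> y \<in> L \<Longrightarrow> \<phi> c * x + \<phi> d * y \<in> L"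
  by (intro module_span.add module_span_smult[OF subring])

lemma s2_power_Suc_in_L:
  assumes "b < p" shows "s2 ^ Suc b \<in> L"
proof (cases "Suc b < p")
  case True
  then show ?thesis using L_base[of 0 "Suc b"] p_gt_1 by simp
next
  case False
  then have "Suc b = p" using assms by simp
  then have "s2 ^ Suc b = \<phi> c12 * s1 + \<phi> c22 * s2" using s2_power by simp
  then show ?thesis using L_lin_comb coeffs generators_in_L by simp
qed

lemma s1_mult_monomial_in_L:
  assumes a: "a < p" and b: "b < p"
  shows "s1 * (s1 ^ a * s2 ^ b) \<in> L"
proof (cases "Suc a < p")
  case True
  then show ?thesis using L_base[OF True b] by (simp add: mult.assoc)
next
  case False
  then have "Suc a = p" using a by simp
  have "s1 * (s1 ^ a * s2 ^ b) = s1 ^ Suc a * s2 ^ b" by (simp add: mult.assoc)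
  also have "\<dots> = (\<phi> c11 * s1 + \<phi> c21 * s2) * s2 ^ b"
    using s1_power \<open>Suc a = p\<close> by simp
  also have "\<dots> = \<phi> c11 * (s1 ^ 1 * s2 ^ b) + \<phi> c21 * s2 ^ Suc b"
    by (simp add: distrib_right mult.assoc)
  finally show ?thesis
    using L_lin_comb coeffs L_base[OF _ b, of 1] p_gt_1 s2_power_Suc_in_L[OF b] by simp
qed

lemma s1_mult_in_L: "x \<in> L \<Longrightarrow> s1 * x \<in> L"
proof (rule module_span_mult_left[OF subring])
  fix g assume "g \<in> monomials s1 s2"
  then obtain a b where "a < p" "b < p" "g = s1 ^ a * s2 ^ b" unfolding monomials_def by auto
  then show "s1 * g \<in> L" using s1_mult_monomial_in_L by simp
qed

lemma s2_mult_monomial_in_L: "a < p \<Longrightarrow> b < p \<Longrightarrow> s2 * (s1 ^ a * s2 ^ b) \<in> L"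
proof (induction a arbitrary: b)
  case 0
  then show ?case using s2_power_Suc_in_L[of b] by simp
next
  case (Suc a)
  have IH: "s2 * (s1 ^ a * s2 ^ b) \<in> L" using Suc by simp
  have "s2 * (s1 ^ Suc a * s2 ^ b) = (s2 * s1) * (s1 ^ a * s2 ^ b)"
    by (simp add: mult.assoc)
  also have "\<dots> = s1 * (s2 * (s1 ^ a * s2 ^ b)) +
      (\<phi> a1 * (s1 * (s1 ^ a * s2 ^ b)) + \<phi> a2 * (s2 * (s1 ^ a * s2 ^ b)))"
    unfolding s2_s1 by (simp add: distrib_right mult.assoc add.assoc)
  finally show ?case
    using module_span.add L_lin_comb coeffs s1_mult_in_L[OF IH] s1_mult_monomial_in_L[of a b] IH Suc.prems
    by simp
qed

lemma s2_mult_in_L: "x \<in> L \<Longrightarrow> s2 * x \<in> L"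
proof (rule module_span_mult_left[OF subring])
  fix g assume "g \<in> monomials s1 s2"
  then obtain a b where "a < p" "b < p" "g = s1 ^ a * s2 ^ b" unfolding monomials_def by auto
  then show "s2 * g \<in> L" using s2_mult_monomial_in_L by simp
qed

lemma subalg_gen_subset_L:
  assumes T: "\<And>s. s \<in> T \<Longrightarrow> s \<in> L \<and> (\<forall>x\<in>L. s * x \<in> L)"
  shows "subalg_gen (\<phi> ` A) T \<subseteq> L"
proof
  fix h assume "h \<in> subalg_gen (\<phi> ` A) T"
  then have "h \<in> L \<and> (\<forall>x\<in>L. h * x \<in> L)"
  proof (induction rule: subalg_gen.induct)
    case (base a)
    then obtain c where "c \<in> A" "a = \<phi> c" by blast
    then show ?case using module_span_smult[OF subring _ generators_in_L(1)] module_span_smult[OF subring]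
      by auto
  next
    case (gen s)
    then show ?case using T by blast
  next
    case zero
    then show ?case by (simp add: module_span.zero)
  next
    case one
    then show ?case using generators_in_L(1) by simp
  next
    case (add x y)
    then show ?case by (simp add: distrib_right module_span.add)
  next
    case (neg x)
    then show ?case using module_span_uminus[OF subring] by simp
  next
    case (mult x y)
    then show ?case by (simp add: mult.assoc)
  qed
  then show "h \<in> L" ..
qed

end

context hopf_rank_p2
begin

text \<open>\<open>A[s\<^sub>1, s\<^sub>2]\<close> lies in the \<open>A\<close>-span of the monomials, and these form a \<open>K\<close>-basis of \<open>H\<close>
since their \<open>K\<close>-span is a subalgebra containing the primitive elements.\<close>

lemma lin_comb_in_subalg_gen_coords:
  assumes rel: "monomial_relations \<phi> \<Delta> \<epsilon> S p t1 t2 A s1 s2 c11 c21 c12 c22 a1 a2"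
    and span: "\<And>t. t \<in> Prim \<phi> \<Delta> \<Longrightarrow> \<exists>\<alpha> \<beta>. t = \<phi> \<alpha> * s1 + \<phi> \<beta> * s2"
    and "s1 \<noteq> s2"
    and h: "\<phi> u * s1 + \<phi> w * s2 \<in> subalg_gen (\<phi> ` A) {s1, s2}"
  shows "u \<in> A" "w \<in> A"
proof -
  interpret R: monomial_relations \<phi> \<Delta> \<epsilon> S p t1 t2 A s1 s2 c11 c21 c12 c22 a1 a2
    by (fact rel)
  interpret K: monomial_relations \<phi> \<Delta> \<epsilon> S p t1 t2 UNIV s1 s2 c11 c21 c12 c22 a1 a2
    by unfold_locales (simp_all add: is_subring_UNIV R.s1_power R.s2_power R.s2_s1)
  have "UNIV \<subseteq> K.L"
  proof -
    have "t \<in> K.L \<and> (\<forall>y\<in>K.L. t * y \<in> K.L)" if prim: "t \<in> Prim \<phi> \<Delta>" for t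
    proof -
      obtain \<alpha> \<beta> where t: "t = \<phi> \<alpha> * s1 + \<phi> \<beta> * s2" using span[OF prim] by blast
      have "t * y = \<phi> \<alpha> * (s1 * y) + \<phi> \<beta> * (s2 * y)" for y
        unfolding t by (simp add: distrib_right mult.assoc)
      then show ?thesis
        unfolding t using K.L_lin_comb K.generators_in_L K.s1_mult_in_L K.s2_mult_in_L by simp
    qed
    then show ?thesis
      using K.subalg_gen_subset_L[of "Prim \<phi> \<Delta>"] prim_gen unfolding primitively_generated_def by simp
  qed
  then have indep: "V.independent (monomials s1 s2)" by (rule monomials_independent)
  have "\<phi> u * s1 + \<phi> w * s2 \<in> R.L"
    using R.subalg_gen_subset_L[of "{s1, s2}"] h R.generators_in_L R.s1_mult_in_L R.s2_mult_in_L
    by blast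
  then obtain r where r: "\<And>g. r g \<in> A"
    "\<phi> u * s1 + \<phi> w * s2 = (\<Sum>g\<in>monomials s1 s2. \<phi> (r g) * g)"
    using module_span_sum_repr[OF R.subring finite_monomials] by blast
  then have "r s1 = u" "r s2 = w"
    using monomial_coords_unique[OF indep \<open>s1 \<noteq> s2\<close> r(2)[symmetric]] by simp_all
  then show "u \<in> A" "w \<in> A" using r(1) by auto
qed

end

context hopf
begin

lemma smult_lin_comb: "\<phi> u * (\<phi> a * x + \<phi> b * y) = \<phi> (u * a) * x + \<phi> (u * b) * y"
  by (simp add: distrib_left phi_smult_smult)

lemma smult_lin_comb_add:
  "\<phi> u * (\<phi> a * x + \<phi> b * y) + \<phi> w * (\<phi> c * x + \<phi> d * y) =
   \<phi> (u * a + w * c) * x + \<phi> (u * b + w * d) * y"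
  by (simp add: distrib_left distrib_right phi_add phi_smult_smult algebra_simps)

lemma lin_comb_in_lower_triangular_basis:
  assumes "a \<noteq> 0" "d \<noteq> 0"
  shows "\<phi> P * x + \<phi> Q * y =
    \<phi> (P / a) * (\<phi> a * x + \<phi> \<theta> * y) + \<phi> ((Q - P * \<theta> / a) / d) * (\<phi> 0 * x + \<phi> d * y)"
  unfolding smult_lin_comb_add using assms by simp

end

section \<open>The Hopf orders given by lower triangular matrices\<close>

locale hopf_order_setting = hopf_rank_p2 \<phi> \<Delta> \<epsilon> S p t1 t2 + uniformized_valuation v \<pi>
  for \<phi> :: "'k::field \<Rightarrow> 'h::ring_1" and \<Delta> \<epsilon> S p t1 t2 and v :: "'k \<Rightarrow> int" and \<pi> +
  fixes B :: "'k ^ 2 ^ 2"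
  assumes B1: "t1 ^ p = \<phi> (B $ 1 $ 1) * t1 + \<phi> (B $ 2 $ 1) * t2"
    and B2: "t2 ^ p = \<phi> (B $ 1 $ 2) * t1 + \<phi> (B $ 2 $ 2) * t2"
begin

text \<open>\<open>\<Theta> M = B \<Theta>\<^sup>(\<^sup>p\<^sup>)\<close>, read in \<open>H\<close> through \<open>t\<^sub>k\<^sup>p = \<Sigma>\<^sub>j b\<^sub>j\<^sub>k t\<^sub>j\<close>.\<close>

lemma twisted_conjugate_columns:
  fixes a \<theta> d :: 'k
  assumes a: "a \<noteq> 0" and d: "d \<noteq> 0"
  defines "M \<equiv> matrix_inv (mat2 a 0 \<theta> d) ** B ** entrywise_pow (mat2 a 0 \<theta> d) p"
  shows "\<phi> (M$1$1) * (\<phi> a * t1 + \<phi> \<theta> * t2) + \<phi> (M$2$1) * (\<phi> 0 * t1 + \<phi> d * t2) =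
      \<phi> (a ^ p) * t1 ^ p + \<phi> (\<theta> ^ p) * t2 ^ p"
    and "\<phi> (M$1$2) * (\<phi> a * t1 + \<phi> \<theta> * t2) + \<phi> (M$2$2) * (\<phi> 0 * t1 + \<phi> d * t2) =
      \<phi> (d ^ p) * t2 ^ p"
proof -
  have M: "M = mat2 ((a^p * B$1$1 + \<theta>^p * B$1$2) / a) (d^p * B$1$2 / a)
      ((a^p * B$2$1 + \<theta>^p * B$2$2 - (a^p * B$1$1 + \<theta>^p * B$1$2) * \<theta> / a) / d)
      ((d^p * B$2$2 - d^p * B$1$2 * \<theta> / a) / d)"
    unfolding M_def using lower_triangular_twisted_conjugate[OF a d] p_gt_1 by simp
  show "\<phi> (M$1$1) * (\<phi> a * t1 + \<phi> \<theta> * t2) + \<phi> (M$2$1) * (\<phi> 0 * t1 + \<phi> d * t2) =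
      \<phi> (a ^ p) * t1 ^ p + \<phi> (\<theta> ^ p) * t2 ^ p"
    unfolding B1 B2 smult_lin_comb_add M lin_comb_eq_iff using a d by (simp add: field_simps)
  show "\<phi> (M$1$2) * (\<phi> a * t1 + \<phi> \<theta> * t2) + \<phi> (M$2$2) * (\<phi> 0 * t1 + \<phi> d * t2) =
      \<phi> (d ^ p) * t2 ^ p"
    unfolding B2 smult_lin_comb_add unfolding smult_lin_comb M lin_comb_eq_iff using a d
    by (simp add: field_simps)
qed

lemma second_generator_power:
  fixes a \<theta> d :: 'k
  assumes a: "a \<noteq> 0" and d: "d \<noteq> 0"
  defines "M \<equiv> matrix_inv (mat2 a 0 \<theta> d) ** B ** entrywise_pow (mat2 a 0 \<theta> d) p"
  shows "(\<phi> 0 * t1 + \<phi> d * t2) ^ p =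
      \<phi> (M$1$2) * (\<phi> a * t1 + \<phi> \<theta> * t2) + \<phi> (M$2$2) * (\<phi> 0 * t1 + \<phi> d * t2)"
  unfolding twisted_conjugate_columns[OF a d] M_def by (simp add: smult_power)

lemma abelian_generator_relations:
  fixes a \<theta> d :: 'k
  assumes comm: "t2 * t1 = t1 * t2" and a: "a \<noteq> 0" and d: "d \<noteq> 0"
    and int: "in_M2 (val_ring v) (matrix_inv (mat2 a 0 \<theta> d) ** B ** entrywise_pow (mat2 a 0 \<theta> d) p)"
  defines "M \<equiv> matrix_inv (mat2 a 0 \<theta> d) ** B ** entrywise_pow (mat2 a 0 \<theta> d) p"
  shows "monomial_relations \<phi> \<Delta> \<epsilon> S p t1 t2 (val_ring v) (\<phi> a * t1 + \<phi> \<theta> * t2) (\<phi> 0 * t1 + \<phi> d * t2)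
    (M$1$1) (M$2$1) (M$1$2) (M$2$2) 0 0"
proof unfold_locales
  have "(\<phi> a * t1) * (\<phi> \<theta> * t2) = (\<phi> \<theta> * t2) * (\<phi> a * t1)"
    by (simp only: smult_mult_smult comm mult.commute)
  then show "(\<phi> a * t1 + \<phi> \<theta> * t2) ^ p =
      \<phi> (M$1$1) * (\<phi> a * t1 + \<phi> \<theta> * t2) + \<phi> (M$2$1) * (\<phi> 0 * t1 + \<phi> d * t2)"
    unfolding twisted_conjugate_columns[OF a d] M_def
    by (simp add: commuting_frobenius[OF _ prime char_H] smult_power)
  show "(\<phi> 0 * t1 + \<phi> d * t2) ^ p =
      \<phi> (M$1$2) * (\<phi> a * t1 + \<phi> \<theta> * t2) + \<phi> (M$2$2) * (\<phi> 0 * t1 + \<phi> d * t2)"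
    unfolding M_def by (rule second_generator_power[OF a d])
  show "(\<phi> 0 * t1 + \<phi> d * t2) * (\<phi> a * t1 + \<phi> \<theta> * t2) =
      (\<phi> a * t1 + \<phi> \<theta> * t2) * (\<phi> 0 * t1 + \<phi> d * t2) + \<phi> 0 * (\<phi> a * t1 + \<phi> \<theta> * t2) + \<phi> 0 * (\<phi> 0 * t1 + \<phi> d * t2)"
    using commutator_lin_comb[of 0 t1 d t2 a \<theta>] comm by simp
qed (use is_subring_val_ring int in \<open>simp_all add: M_def in_M2_def\<close>)

lemma nonabelian_twisted_conjugate:
  fixes a \<theta> d :: 'k
  assumes nonab: "t2 * t1 \<noteq> t1 * t2" and gexp: "t2 * t1 - t1 * t2 = \<phi> \<gamma>1 * t1 + \<phi> (- \<delta>) * t2"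
    and a: "a \<noteq> 0" and d: "d \<noteq> 0"
  shows "matrix_inv (mat2 a 0 \<theta> d) ** B ** entrywise_pow (mat2 a 0 \<theta> d) p =
    mat2 ((a * \<delta>) ^ (p - 1)) 0 (\<theta> / d * ((\<theta> * \<gamma>1) ^ (p - 1) - (a * \<delta>) ^ (p - 1))) ((d * \<gamma>1) ^ (p - 1))"
proof -
  define q where "q = p - 1"
  have q: "p = Suc q" using p_gt_1 unfolding q_def by auto
  have pow: "(\<phi> \<alpha> * t1 + \<phi> \<beta> * t2) ^ p = \<phi> ((\<beta> * \<gamma>1 + \<alpha> * \<delta>) ^ q) * (\<phi> \<alpha> * t1 + \<phi> \<beta> * t2)"
    for \<alpha> \<beta>
    using nonabelian_Prim_power[OF _ gexp] nonab unfolding q_def by simp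
  have "\<phi> (B$1$1) * t1 + \<phi> (B$2$1) * t2 = \<phi> (\<delta> ^ q) * t1 + \<phi> 0 * t2"
    "\<phi> (B$1$2) * t1 + \<phi> (B$2$2) * t2 = \<phi> 0 * t1 + \<phi> (\<gamma>1 ^ q) * t2"
    using B1 B2 pow[of 1 0] pow[of 0 1] by simp_all
  then have "B$1$1 = \<delta> ^ q" "B$2$1 = 0" "B$1$2 = 0" "B$2$2 = \<gamma>1 ^ q"
    unfolding lin_comb_eq_iff by simp_all
  then show ?thesis
    unfolding lower_triangular_twisted_conjugate[OF a d prime_gt_0_nat[OF prime]]
    unfolding mat2_eq_iff q_def[symmetric] q(1) using a d
    by (simp add: field_simps power_mult_distrib)
qed

lemma nonabelian_generators_commutator:
  assumes gexp: "t2 * t1 - t1 * t2 = \<phi> \<gamma>1 * t1 + \<phi> (- \<delta>) * t2"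
  shows "(\<phi> 0 * t1 + \<phi> d * t2) * (\<phi> a * t1 + \<phi> \<theta> * t2) =
      (\<phi> a * t1 + \<phi> \<theta> * t2) * (\<phi> 0 * t1 + \<phi> d * t2) + \<phi> (d * \<gamma>1) * (\<phi> a * t1 + \<phi> \<theta> * t2)
      + \<phi> (- (\<theta> * \<gamma>1 + a * \<delta>)) * (\<phi> 0 * t1 + \<phi> d * t2)"
proof -
  have "(\<phi> 0 * t1 + \<phi> d * t2) * (\<phi> a * t1 + \<phi> \<theta> * t2) - (\<phi> a * t1 + \<phi> \<theta> * t2) * (\<phi> 0 * t1 + \<phi> d * t2)
      = \<phi> (d * a) * (t2 * t1 - t1 * t2)"
    using commutator_lin_comb[of 0 t1 d t2 a \<theta>] by simp
  also have "\<dots> = \<phi> (d * \<gamma>1) * (\<phi> a * t1 + \<phi> \<theta> * t2) + \<phi> (- (\<theta> * \<gamma>1 + a * \<delta>)) * (\<phi> 0 * t1 + \<phi> d * t2)"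
    unfolding gexp smult_lin_comb_add smult_lin_comb lin_comb_eq_iff by (simp add: algebra_simps)
  finally show ?thesis by (simp add: diff_eq_eq add.assoc)
qed

text \<open>The coefficients are \<open>\<kappa>\<^sup>p\<^sup>-\<^sup>1\<close> with \<open>\<kappa> = \<theta>\<gamma>\<^sub>1 + a\<delta>\<close> for \<open>x\<^sub>1\<^sup>p\<close>, and \<open>d\<gamma>\<^sub>1\<close>, \<open>-\<kappa>\<close> for
\<open>[x\<^sub>2, x\<^sub>1]\<close>; the hypothesis \<open>v(\<theta>) \<le> v(d)\<close> is what makes \<open>\<theta>\<gamma>\<^sub>1\<close> integral.\<close>

lemma nonabelian_generator_relations:
  fixes a \<theta> d :: 'k
  assumes nonab: "t2 * t1 \<noteq> t1 * t2" and a: "a \<noteq> 0" and d: "d \<noteq> 0"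
    and \<theta>: "\<theta> \<noteq> 0" "v \<theta> \<le> v d"
    and int: "in_M2 (val_ring v) (matrix_inv (mat2 a 0 \<theta> d) ** B ** entrywise_pow (mat2 a 0 \<theta> d) p)"
  obtains c11 c12 c22 a1 a2 where "monomial_relations \<phi> \<Delta> \<epsilon> S p t1 t2 (val_ring v)
    (\<phi> a * t1 + \<phi> \<theta> * t2) (\<phi> 0 * t1 + \<phi> d * t2) c11 0 c12 c22 a1 a2"
proof -
  define M where "M = matrix_inv (mat2 a 0 \<theta> d) ** B ** entrywise_pow (mat2 a 0 \<theta> d) p"
  have M_int: "M$r$s \<in> val_ring v" for r s
    using int unfolding in_M2_def M_def by blast
  obtain \<gamma>1 \<delta> where gexp: "t2 * t1 - t1 * t2 = \<phi> \<gamma>1 * t1 + \<phi> (- \<delta>) * t2"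
    using Prim_obtain_coords[OF Prim_commutator[OF t2_Prim t1_Prim]] by (metis minus_minus)
  note M = nonabelian_twisted_conjugate[OF nonab gexp a d, of \<theta>, folded M_def]
  have q: "p - 1 \<ge> 1" using p_gt_1 by simp
  have R1: "a * \<delta> \<in> val_ring v" and R2: "d * \<gamma>1 \<in> val_ring v"
    using val_ring_of_power[OF _ q] M_int[of 1 1] M_int[of 2 2] unfolding M by simp_all
  have "\<theta> * \<gamma>1 \<in> val_ring v"
    using val_ring_of_scaled_power_diff[OF \<theta> d R1 q] M_int[of 2 1] unfolding M by simp
  then have R\<kappa>: "\<theta> * \<gamma>1 + a * \<delta> \<in> val_ring v"
    using val_ring_add[OF _ R1] by blast
  have "monomial_relations \<phi> \<Delta> \<epsilon> S p t1 t2 (val_ring v) (\<phi> a * t1 + \<phi> \<theta> * t2) (\<phi> 0 * t1 + \<phi> d * t2)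
      ((\<theta> * \<gamma>1 + a * \<delta>) ^ (p - 1)) 0 (M$1$2) (M$2$2) (d * \<gamma>1) (- (\<theta> * \<gamma>1 + a * \<delta>))"
    using is_subring_val_ring val_ring_power[OF R\<kappa>] M_int R2 val_ring_uminus[OF R\<kappa>]
      nonabelian_generators_commutator[OF gexp] nonabelian_Prim_power[OF _ gexp, of a \<theta>] nonab
      second_generator_power[OF a d, of \<theta>] unfolding M_def
    by unfold_locales simp_all
  then show ?thesis using that by blast
qed

lemma generators_monomial_relations:
  fixes a \<theta> d :: 'k
  assumes a: "a \<noteq> 0" and d: "d \<noteq> 0" and \<theta>: "vK_le v \<theta> (v d)"
    and int: "in_M2 (val_ring v) (matrix_inv (mat2 a 0 \<theta> d) ** B ** entrywise_pow (mat2 a 0 \<theta> d) p)"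
  obtains c11 c21 c12 c22 a1 a2 where "monomial_relations \<phi> \<Delta> \<epsilon> S p t1 t2 (val_ring v)
    (\<phi> a * t1 + \<phi> \<theta> * t2) (\<phi> 0 * t1 + \<phi> d * t2) c11 c21 c12 c22 a1 a2"
proof (cases "t2 * t1 = t1 * t2")
  case True
  show ?thesis by (rule that[OF abelian_generator_relations[OF True a d int]])
next
  case False
  have \<theta>': "\<theta> \<noteq> 0" "v \<theta> \<le> v d" using \<theta> unfolding vK_le_def by simp_all
  obtain c11 c12 c22 a1 a2 where "monomial_relations \<phi> \<Delta> \<epsilon> S p t1 t2 (val_ring v)
      (\<phi> a * t1 + \<phi> \<theta> * t2) (\<phi> 0 * t1 + \<phi> d * t2) c11 0 c12 c22 a1 a2"
    using nonabelian_generator_relations[OF False a d \<theta>' int] .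
  then show ?thesis by (rule that)
qed

lemma order_lin_comb_mem_val_ring:
  fixes a \<theta> d :: 'k
  assumes a: "a \<noteq> 0" and d: "d \<noteq> 0" and \<theta>: "vK_le v \<theta> (v d)"
    and int: "in_M2 (val_ring v) (matrix_inv (mat2 a 0 \<theta> d) ** B ** entrywise_pow (mat2 a 0 \<theta> d) p)"
    and h: "\<phi> u * (\<phi> a * t1 + \<phi> \<theta> * t2) + \<phi> w * (\<phi> 0 * t1 + \<phi> d * t2)
      \<in> hopf_order_given_by \<phi> (val_ring v) t1 t2 (mat2 a 0 \<theta> d)"
  shows "u \<in> val_ring v" "w \<in> val_ring v"
proof -
  obtain c11 c21 c12 c22 a1 a2 where rel: "monomial_relations \<phi> \<Delta> \<epsilon> S p t1 t2 (val_ring v)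
      (\<phi> a * t1 + \<phi> \<theta> * t2) (\<phi> 0 * t1 + \<phi> d * t2) c11 c21 c12 c22 a1 a2"
    using generators_monomial_relations[OF a d \<theta> int] .
  have span: "\<exists>\<alpha> \<beta>. t = \<phi> \<alpha> * (\<phi> a * t1 + \<phi> \<theta> * t2) + \<phi> \<beta> * (\<phi> 0 * t1 + \<phi> d * t2)"
    if "t \<in> Prim \<phi> \<Delta>" for t
    using Prim_obtain_coords[OF that] lin_comb_in_lower_triangular_basis[OF a d] by metis
  have neq: "\<phi> a * t1 + \<phi> \<theta> * t2 \<noteq> \<phi> 0 * t1 + \<phi> d * t2"
    using a unfolding lin_comb_eq_iff by simp
  have "\<phi> u * (\<phi> a * t1 + \<phi> \<theta> * t2) + \<phi> w * (\<phi> 0 * t1 + \<phi> d * t2)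
      \<in> subalg_gen (\<phi> ` val_ring v) {\<phi> a * t1 + \<phi> \<theta> * t2, \<phi> 0 * t1 + \<phi> d * t2}"
    using h unfolding hopf_order_given_by_def by simp
  then show "u \<in> val_ring v" "w \<in> val_ring v"
    using lin_comb_in_subalg_gen_coords[OF rel span neq] by blast+
qed

lemma order_subset_bounds:
  assumes \<theta>: "vK_le v \<theta> j"
    and int: "in_M2 (val_ring v)
      (matrix_inv (mat2 (\<pi> powi i) 0 \<theta> (\<pi> powi j)) ** B ** entrywise_pow (mat2 (\<pi> powi i) 0 \<theta> (\<pi> powi j)) p)"
    and sub: "hopf_order_given_by \<phi> (val_ring v) t1 t2 (mat2 (\<pi> powi i') 0 \<theta>' (\<pi> powi j'))
      \<subseteq> hopf_order_given_by \<phi> (val_ring v) t1 t2 (mat2 (\<pi> powi i) 0 \<theta> (\<pi> powi j))"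
  shows "i \<le> i'" "j \<le> j'" "i = i' \<Longrightarrow> vK_ge v (\<theta>' - \<theta>) j"
proof -
  let ?O = "hopf_order_given_by \<phi> (val_ring v) t1 t2 (mat2 (\<pi> powi i) 0 \<theta> (\<pi> powi j))"
  let ?O' = "hopf_order_given_by \<phi> (val_ring v) t1 t2 (mat2 (\<pi> powi i') 0 \<theta>' (\<pi> powi j'))"
  have nz: "\<pi> powi k \<noteq> 0" for k using uniformizer by simp
  have coords: "u \<in> val_ring v \<and> w \<in> val_ring v"
    if "\<phi> u * (\<phi> (\<pi> powi i) * t1 + \<phi> \<theta> * t2) + \<phi> w * (\<phi> 0 * t1 + \<phi> (\<pi> powi j) * t2) \<in> ?O"
    for u w
    using order_lin_comb_mem_val_ring[OF nz nz _ int that] \<theta> by simp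
  have "\<phi> (\<pi> powi i') * t1 + \<phi> \<theta>' * t2 \<in> ?O'" "\<phi> 0 * t1 + \<phi> (\<pi> powi j') * t2 \<in> ?O'"
    unfolding hopf_order_given_by_def by (simp_all add: subalg_gen.gen)
  then have gen: "\<phi> (\<pi> powi i') * t1 + \<phi> \<theta>' * t2 \<in> ?O" "\<phi> 0 * t1 + \<phi> (\<pi> powi j') * t2 \<in> ?O"
    using sub by blast+
  have "\<pi> powi i' / \<pi> powi i \<in> val_ring v \<and>
      (\<theta>' - \<pi> powi i' * \<theta> / \<pi> powi i) / \<pi> powi j \<in> val_ring v"
    by (rule coords[OF gen(1)[unfolded lin_comb_in_lower_triangular_basis[OF nz[of i] nz[of j],
        where P = "\<pi> powi i'" and Q = \<theta>' and \<theta> = \<theta>]]])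
  then have "\<pi> powi i' / \<pi> powi i \<in> val_ring v"
    and diff: "(\<theta>' - \<pi> powi i' * \<theta> / \<pi> powi i) / \<pi> powi j \<in> val_ring v" by simp_all
  then show "i \<le> i'" by (simp add: powi_divide_powi_mem_val_ring_iff)
  show "i = i' \<Longrightarrow> vK_ge v (\<theta>' - \<theta>) j"
    using diff uniformizer by (simp add: divide_powi_mem_val_ring_iff)
  have "0 / \<pi> powi i \<in> val_ring v \<and> (\<pi> powi j' - 0 * \<theta> / \<pi> powi i) / \<pi> powi j \<in> val_ring v"
    by (rule coords[OF gen(2)[unfolded lin_comb_in_lower_triangular_basis[OF nz[of i] nz[of j],
        where P = 0 and Q = "\<pi> powi j'" and \<theta> = \<theta>]]])
  then have "\<pi> powi j' / \<pi> powi j \<in> val_ring v" by simp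
  then show "j \<le> j'" by (simp add: powi_divide_powi_mem_val_ring_iff)
qed

lemma order_subset_of_congruent:
  assumes "vK_ge v (\<theta> - \<theta>') j"
  shows "hopf_order_given_by \<phi> (val_ring v) t1 t2 (mat2 a 0 \<theta>' (\<pi> powi j))
       \<subseteq> hopf_order_given_by \<phi> (val_ring v) t1 t2 (mat2 a 0 \<theta> (\<pi> powi j))"
proof -
  let ?O = "subalg_gen (\<phi> ` val_ring v) {\<phi> a * t1 + \<phi> \<theta> * t2, \<phi> 0 * t1 + \<phi> (\<pi> powi j) * t2}"
  define r where "r = (\<theta>' - \<theta>) / \<pi> powi j"
  have "r \<in> val_ring v"
    using assms unfolding r_def divide_powi_mem_val_ring_iff vK_ge_minus_commute .
  then have r: "\<phi> r \<in> ?O" by (simp add: subalg_gen.base)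
  have x1: "\<phi> a * t1 + \<phi> \<theta> * t2 \<in> ?O" and x2: "\<phi> 0 * t1 + \<phi> (\<pi> powi j) * t2 \<in> ?O"
    by (simp_all add: subalg_gen.gen)
  have "\<phi> a * t1 + \<phi> \<theta>' * t2 = (\<phi> a * t1 + \<phi> \<theta> * t2) + \<phi> r * (\<phi> 0 * t1 + \<phi> (\<pi> powi j) * t2)"
    using smult_lin_comb_add[of 1 a t1 \<theta> t2 r 0 "\<pi> powi j"] uniformizer by (simp add: r_def)
  also have "\<dots> \<in> ?O"
    by (rule subalg_gen.add[OF x1 subalg_gen.mult[OF r x2]])
  finally show ?thesis
    unfolding hopf_order_given_by_def mat2_nth using x2 by (intro subalg_gen_subset) simp
qed

end

theorem proposition6p4:
  fixes v :: "'k::field \<Rightarrow> int" and p :: nat and \<pi> :: 'k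
    and \<phi> :: "'k \<Rightarrow> 'h::ring_1" and \<Delta> :: "'h \<Rightarrow> ('h \<times> 'h) list"
    and \<epsilon> :: "'h \<Rightarrow> 'k" and S :: "'h \<Rightarrow> 'h"
    and t1 t2 :: 'h and B :: "'k ^ 2 ^ 2"
    and i j i' j' :: int and \<theta> \<theta>' :: 'k
  assumes dvr: "normalized_discrete_valuation v" and complete: "valuation_complete v"
    and char: "prime p" "of_nat p = (0::'k)"
    and unif: "\<pi> \<noteq> 0" "v \<pi> = 1"
    and hopf: "hopf_algebra \<phi> \<Delta> \<epsilon> S"
    and rank: "K_rank \<phi> (p ^ 2)"
    and pg: "primitively_generated \<phi> \<Delta>"
    and basis: "prim_basis \<phi> \<Delta> t1 t2"
    and B1: "t1 ^ p = \<phi> (B $ 1 $ 1) * t1 + \<phi> (B $ 2 $ 1) * t2"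
    and B2: "t2 ^ p = \<phi> (B $ 1 $ 2) * t1 + \<phi> (B $ 2 $ 2) * t2"
    and vt: "vK_le v \<theta> j" and vt': "vK_le v \<theta>' j'"
    and int1: "in_M2 (val_ring v)
       (matrix_inv (mat2 (\<pi> powi i) 0 \<theta> (\<pi> powi j)) ** B **
        entrywise_pow (mat2 (\<pi> powi i) 0 \<theta> (\<pi> powi j)) p)"
    and int2: "in_M2 (val_ring v)
       (matrix_inv (mat2 (\<pi> powi i') 0 \<theta>' (\<pi> powi j')) ** B **
        entrywise_pow (mat2 (\<pi> powi i') 0 \<theta>' (\<pi> powi j')) p)"
  shows "hopf_order_given_by \<phi> (val_ring v) t1 t2 (mat2 (\<pi> powi i) 0 \<theta> (\<pi> powi j)) =
         hopf_order_given_by \<phi> (val_ring v) t1 t2 (mat2 (\<pi> powi i') 0 \<theta>' (\<pi> powi j'))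
     \<longleftrightarrow> i = i' \<and> j = j' \<and> vK_ge v (\<theta> - \<theta>') j"
proof -
  interpret hopf_order_setting \<phi> \<Delta> \<epsilon> S p t1 t2 v \<pi> B
    by unfold_locales (fact hopf char rank pg basis dvr unif B1 B2)+
  show ?thesis
  proof
    assume eq: "hopf_order_given_by \<phi> (val_ring v) t1 t2 (mat2 (\<pi> powi i) 0 \<theta> (\<pi> powi j)) =
      hopf_order_given_by \<phi> (val_ring v) t1 t2 (mat2 (\<pi> powi i') 0 \<theta>' (\<pi> powi j'))"
    have "i \<le> i'" "j \<le> j'" "i = i' \<Longrightarrow> vK_ge v (\<theta>' - \<theta>) j"
      using order_subset_bounds[OF vt int1 equalityD2[OF eq]] by auto
    moreover have "i' \<le> i" "j' \<le> j"
      using order_subset_bounds[OF vt' int2 equalityD1[OF eq]] by auto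
    ultimately show "i = i' \<and> j = j' \<and> vK_ge v (\<theta> - \<theta>') j"
      by (simp add: vK_ge_minus_commute)
  next
    assume "i = i' \<and> j = j' \<and> vK_ge v (\<theta> - \<theta>') j"
    then show "hopf_order_given_by \<phi> (val_ring v) t1 t2 (mat2 (\<pi> powi i) 0 \<theta> (\<pi> powi j)) =
      hopf_order_given_by \<phi> (val_ring v) t1 t2 (mat2 (\<pi> powi i') 0 \<theta>' (\<pi> powi j'))"
      using order_subset_of_congruent vK_ge_minus_commute by (metis subset_antisym)
  qed
qed

end
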